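(* For each integer $m\ge0$, both $\{G_j(x)^{q^m}\}_{j\ge0}$ and $\{D_j(x)^{q^m}\}_{j\ge0}$ are orthonormal bases of $C(O,K)$.
   Context: Let $q$ be a prime power, $K=\mathbf{F}_q((T))$, $O=\mathbf{F}_q[[T]]$ with $T$-adic absolute value. $C(O,K)$ is the $K$-Banach space of continuous functions $O\to K$ with sup-norm; a sequence $(f_n)$ is an orthonormal basis if every $f$ can be written uniquely as $f=\sum a_nf_n$ with $a_n\in K$, $a_n\to0$, and then $\|f\|=\max|a_n|$. For $n\ge1$: $[n]=T^{q^n}-T$, $F_0=1$, $F_n=[n][n-1]^q\cdots[1]^{q^{n-1}}$, $e_n(x)=\prod_{m\in\mathbf{F}_q[T],\deg m<n}(x-m)$; $E_0(x)=x$, $E_n=e_n/F_n$. Hasse derivatives: $\mathcal{D}_n(\sum_ia_iT^i)=\sum_i\binom{i}{n}a_iT^{i-n}$ (binomials in $\mathbf{F}_q$). For $j\ge0$ with base-$q$ expansion $j=\alpha_0+\cdots+\alpha_sq^s$ ($0\le\alpha_i<q$): $G_j=\prod_{n=0}^sE_n^{\alpha_n}$, $D_j=\prod_{n=0}^s\mathcal{D}_n^{\alpha_n}$ ($G_0=D_0=1$). *)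

theory Defs
  imports "HOL-Analysis.Analysis" "HOL-Computational_Algebra.Formal_Laurent_Series"
begin

text \<open>Setting: 'a is a finite field F_q (q = CARD('a), automatically a prime power),
  K = 'a fls = F_q((T)) with the library's T-adic metric
  dist a b = 2^(-v(a-b)), O = F_q[[T]] = {x. v(x) >= 0}.\<close>

definition tabs :: "'a::{finite,field} fls \<Rightarrow> real" where
  "tabs x = dist x 0"

definition Oring :: "'a::{finite,field} fls set" where
  "Oring = {x. 0 \<le> fls_subdegree x}"

definition CO :: "('a::{finite,field} fls \<Rightarrow> 'a fls) \<Rightarrow> bool" where
  "CO f \<longleftrightarrow> continuous_on Oring f"

definition supnorm :: "('a::{finite,field} fls \<Rightarrow> 'a fls) \<Rightarrow> real" where
  "supnorm f = (SUP x\<in>Oring. tabs (f x))"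

definition orthonormal_basis :: "(nat \<Rightarrow> 'a::{finite,field} fls \<Rightarrow> 'a fls) \<Rightarrow> bool" where
  "orthonormal_basis g \<longleftrightarrow>
     (\<forall>n. CO (g n)) \<and>
     (\<forall>f. CO f \<longrightarrow>
        (\<exists>!a::nat \<Rightarrow> 'a fls. (\<lambda>n. tabs (a n)) \<longlonglongrightarrow> 0 \<and>
              (\<lambda>N. supnorm (\<lambda>x. f x - (\<Sum>n<N. a n * g n x))) \<longlonglongrightarrow> 0) \<and>
        (\<forall>a::nat \<Rightarrow> 'a fls. (\<lambda>n. tabs (a n)) \<longlonglongrightarrow> 0 \<and>
              (\<lambda>N. supnorm (\<lambda>x. f x - (\<Sum>n<N. a n * g n x))) \<longlonglongrightarrow> 0
           \<longrightarrow> supnorm f = (SUP n. tabs (a n))))"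

definition brk :: "nat \<Rightarrow> 'a::{finite,field} fls" where
  "brk n = fls_X ^ (CARD('a) ^ n) - fls_X"

definition Fcar :: "nat \<Rightarrow> 'a::{finite,field} fls" where
  "Fcar n = (\<Prod>i\<in>{1..n}. brk i ^ (CARD('a) ^ (n - i)))"

definition polys_lt :: "nat \<Rightarrow> 'a::{finite,field} fls set" where
  "polys_lt n = {p. \<forall>i. fls_nth p i \<noteq> 0 \<longrightarrow> 0 \<le> i \<and> i < int n}"

definition ecar :: "nat \<Rightarrow> 'a::{finite,field} fls \<Rightarrow> 'a fls" where
  "ecar n x = (\<Prod>m\<in>polys_lt n. x - m)"

definition Ecar :: "nat \<Rightarrow> 'a::{finite,field} fls \<Rightarrow> 'a fls" where
  "Ecar n x = (if n = 0 then x else ecar n x / Fcar n)"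

text \<open>Hasse derivative: D_n(sum a_i T^i) = sum_i binom(i,n) a_i T^(i-n), for x in O.\<close>
definition hasse :: "nat \<Rightarrow> 'a::{finite,field} fls \<Rightarrow> 'a fls" where
  "hasse n x = fps_to_fls (Abs_fps (\<lambda>k. of_nat ((k + n) choose n) * fls_nth x (int (k + n))))"

definition digit :: "nat \<Rightarrow> nat \<Rightarrow> nat \<Rightarrow> nat" where
  "digit q j n = (j div q ^ n) mod q"

definition Gfun :: "nat \<Rightarrow> 'a::{finite,field} fls \<Rightarrow> 'a fls" where
  "Gfun j x = (\<Prod>n\<le>j. Ecar n x ^ digit CARD('a) j n)"

definition Dfun :: "nat \<Rightarrow> 'a::{finite,field} fls \<Rightarrow> 'a fls" where
  "Dfun j x = (\<Prod>n\<le>j. hasse n x ^ digit CARD('a) j n)"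

end

(*
  Reduction modulo T maps O onto F_q.  Since E_n(x) = kappa_n x_n and D_n(x) = x_n modulo T,
  where x_n is the n-th T-adic digit of x and kappa_n is a nonzero constant, and since Frobenius
  fixes F_q, the reduction of G_j(x)^(q^m) and of D_j(x)^(q^m) is a nonzero constant times the
  digit monomial  prod_n x_n^(alpha_n).  For E_n this comes from comparing lowest terms in
  e_n(x) = E_n(x) F_n, using v(F_n) = n + sum of v(m) over the nonzero m with deg m < n.

  For every k the digit monomials with j < q^k form a basis of the functions F_q^k -> F_q: they
  span by Lagrange interpolation in each digit, and there are q^k of them.  Any family of
  continuous O-valued functions with such reductions is an orthonormal basis.  Reducing the
  lowest-order coefficients shows that a finite combination has sup norm max |a_n|, which gives
  uniqueness and the norm formula.  A continuous function is uniformly continuous on the compact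
  ring O, so its coefficient of T^t only depends on finitely many digits; successive approximation
  modulo T^(t+1) then produces T-adically convergent coefficients.
*)

theory Submission
  imports Defs
begin

unbundle fps_syntax

section \<open>Valuations of Laurent series\<close>

text \<open>\<open>val_ge t z\<close> means \<open>v(z) \<ge> t\<close>, with \<open>v(0) = \<infinity>\<close>; note that \<open>fls_subdegree 0 = 0\<close>.\<close>
definition val_ge :: "int \<Rightarrow> 'a::zero fls \<Rightarrow> bool" where
  "val_ge t z \<longleftrightarrow> (\<forall>i<t. z $$ i = 0)"

lemma val_ge_0 [simp]: "val_ge t 0"
  by (simp add: val_ge_def)

lemma val_ge_add: "val_ge t a \<Longrightarrow> val_ge t b \<Longrightarrow> val_ge t (a + (b::'a::monoid_add fls))"
  by (simp add: val_ge_def)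

lemma val_ge_diff: "val_ge t a \<Longrightarrow> val_ge t b \<Longrightarrow> val_ge t (a - (b::'a::group_add fls))"
  by (simp add: val_ge_def)

lemma val_ge_minus_iff [simp]: "val_ge t (- a) \<longleftrightarrow> val_ge t (a::'a::group_add fls)"
  by (simp add: val_ge_def)

lemma val_ge_diff_commute: "val_ge t (a - b) \<longleftrightarrow> val_ge t (b - (a::'a::group_add fls))"
  by (metis minus_diff_eq val_ge_minus_iff)

lemma val_ge_sum:
  "(\<And>i. i \<in> A \<Longrightarrow> val_ge t (f i)) \<Longrightarrow> val_ge t (\<Sum>i\<in>A. f i :: 'a::comm_monoid_add fls)"
  by (simp add: val_ge_def fls_nth_sum)

lemma val_ge_mono: "val_ge t a \<Longrightarrow> s \<le> t \<Longrightarrow> val_ge s a"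
  by (simp add: val_ge_def)

lemma val_ge_iff_le_subdegree: "z \<noteq> 0 \<Longrightarrow> val_ge t z \<longleftrightarrow> t \<le> fls_subdegree z"
proof
  assume "z \<noteq> 0" "val_ge t z"
  then show "t \<le> fls_subdegree z"
    unfolding val_ge_def using nth_fls_subdegree_nonzero not_less by blast
qed (simp add: val_ge_def)

lemma val_ge_subdegree: "val_ge (fls_subdegree z) z"
  by (simp add: val_ge_def)

lemma val_ge_succ: "val_ge t z \<Longrightarrow> z $$ t = 0 \<Longrightarrow> val_ge (t + 1) z"
  unfolding val_ge_def by (metis zless_add1_eq)

lemma val_ge_mult:
  assumes "val_ge s a" "val_ge t (b::'a::{comm_monoid_add,mult_zero} fls)"
  shows "val_ge (s + t) (a * b)"
proof (cases "a = 0 \<or> b = 0")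
  case False
  then have "s \<le> fls_subdegree a" "t \<le> fls_subdegree b"
    using assms val_ge_iff_le_subdegree by auto
  then show ?thesis unfolding val_ge_def using fls_times_nth_eq0 by force
qed auto

lemma fls_times_nth_val_ge:
  assumes "val_ge s a" "val_ge u (b::'a::comm_ring_1 fls)"
  shows "(a * b) $$ (s + u) = a $$ s * b $$ u"
proof (cases "a = 0 \<or> b = 0")
  case False
  then have sa: "s \<le> fls_subdegree a" and sb: "u \<le> fls_subdegree b"
    using assms val_ge_iff_le_subdegree by auto
  show ?thesis
  proof (cases "s = fls_subdegree a \<and> u = fls_subdegree b")
    case True
    then show ?thesis using fls_times_base[of a b] by simp
  next
    case False
    then have "s + u < fls_subdegree a + fls_subdegree b" using sa sb by linarith
    moreover have "a $$ s = 0 \<or> b $$ u = 0" using False sa sb by (cases "s < fls_subdegree a") auto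
    ultimately show ?thesis using fls_times_nth_eq0 by fastforce
  qed
qed auto

section \<open>The \<open>T\<close>-adic absolute value\<close>

lemma tabs_eq: "tabs (z::'a::{finite,field} fls) = (if z = 0 then 0 else 2 powr - real_of_int (fls_subdegree z))"
  unfolding tabs_def dist_fls_def by (auto simp: powr_realpow[symmetric] powr_minus)

lemma dist_eq_tabs: "dist a b = tabs (a - b :: 'a::{finite,field} fls)"
  unfolding tabs_def dist_fls_def by simp

lemma tabs_nonneg: "0 \<le> tabs z"
  by (simp add: tabs_def)

lemma tabs_0 [simp]: "tabs (0::'a::{finite,field} fls) = 0"
  by (simp add: tabs_def)

lemma tabs_eq_0_iff [simp]: "tabs (z::'a::{finite,field} fls) = 0 \<longleftrightarrow> z = 0"
  by (simp add: tabs_def)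

lemma tabs_mult: "tabs (a * b) = tabs a * tabs (b::'a::{finite,field} fls)"
  by (cases "a = 0 \<or> b = 0") (auto simp: tabs_eq powr_add[symmetric])

lemma tabs_minus [simp]: "tabs (- a) = tabs (a::'a::{finite,field} fls)"
  by (simp add: tabs_eq fls_subdegree_minus)

lemma tabs_le_powr_iff_val_ge: "tabs (z::'a::{finite,field} fls) \<le> 2 powr - real_of_int t \<longleftrightarrow> val_ge t z"
  by (cases "z = 0") (auto simp: tabs_eq val_ge_iff_le_subdegree)

lemma tabs_less_powr_imp_val_ge:
  "tabs (z::'a::{finite,field} fls) < 2 powr - real_of_int t \<Longrightarrow> val_ge (t + 1) z"
  by (cases "z = 0") (auto simp: tabs_eq val_ge_iff_le_subdegree)

lemma tabs_eq_powr_if_nth_nonzero: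
  assumes "val_ge t z" "z $$ t \<noteq> 0"
  shows "tabs (z::'a::{finite,field} fls) = 2 powr - real_of_int t"
proof -
  have "z \<noteq> 0" using assms(2) by auto
  moreover have "fls_subdegree z = t"
    using assms \<open>z \<noteq> 0\<close> fls_subdegree_leI val_ge_iff_le_subdegree by (metis order.antisym)
  ultimately show ?thesis by (simp add: tabs_eq)
qed

lemma tabs_add_le_max: "tabs (a + b) \<le> max (tabs a) (tabs (b::'a::{finite,field} fls))"
proof (cases "a = 0 \<or> b = 0")
  case False
  define t where "t = min (fls_subdegree a) (fls_subdegree b)"
  have "val_ge t a" "val_ge t b"
    unfolding t_def by (auto intro: val_ge_mono[OF val_ge_subdegree])
  then have "tabs (a + b) \<le> 2 powr - real_of_int t"
    by (simp add: tabs_le_powr_iff_val_ge val_ge_add)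
  also have "\<dots> \<le> max (tabs a) (tabs b)"
    using False by (simp add: tabs_eq t_def min_def)
  finally show ?thesis .
qed (auto simp: tabs_nonneg)

lemma tabs_add_le: "tabs (a + b) \<le> tabs a + tabs (b::'a::{finite,field} fls)"
  using tabs_add_le_max[of a b] tabs_nonneg[of a] tabs_nonneg[of b] by linarith

lemma tabs_sum_le:
  assumes "\<And>i. i \<in> A \<Longrightarrow> tabs (f i) \<le> B" "0 \<le> B"
  shows "tabs (\<Sum>i\<in>A. f i :: 'a::{finite,field} fls) \<le> B"
  using assms
proof (induction A rule: infinite_finite_induct)
  case (insert x F)
  have "tabs (f x + sum f F) \<le> max (tabs (f x)) (tabs (sum f F))" by (rule tabs_add_le_max)
  also have "\<dots> \<le> B" using insert by simp
  finally show ?case using insert by simp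
qed auto

lemma exists_powr_less: "0 < (e::real) \<Longrightarrow> \<exists>t::int. 2 powr - real_of_int t < e"
proof -
  assume "0 < e"
  obtain K :: nat where "1 / e < 2 ^ K" using real_arch_pow[of 2 "1 / e"] by auto
  then have "2 powr - real_of_int (int K) < e"
    using \<open>0 < e\<close> by (simp add: powr_minus powr_realpow field_simps)
  then show ?thesis by blast
qed

lemma tendsto_fls_iff_val_ge:
  fixes f :: "'b \<Rightarrow> 'a::{finite,field} fls"
  shows "(f \<longlongrightarrow> l) F \<longleftrightarrow> (\<forall>t. eventually (\<lambda>x. val_ge t (f x - l)) F)"
proof
  assume lim: "(f \<longlongrightarrow> l) F"
  show "\<forall>t. eventually (\<lambda>x. val_ge t (f x - l)) F"
  proof
    fix t
    have "eventually (\<lambda>x. dist (f x) l < 2 powr - real_of_int (t - 1)) F"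
      using lim by (rule tendstoD) simp
    then show "eventually (\<lambda>x. val_ge t (f x - l)) F"
      by eventually_elim (use tabs_less_powr_imp_val_ge[of _ "t - 1"] in \<open>simp add: dist_eq_tabs\<close>)
  qed
next
  assume val: "\<forall>t. eventually (\<lambda>x. val_ge t (f x - l)) F"
  show "(f \<longlongrightarrow> l) F"
  proof (rule tendstoI)
    fix e :: real
    assume "0 < e"
    then obtain t where t: "2 powr - real_of_int t < e" using exists_powr_less by blast
    from val have "eventually (\<lambda>x. val_ge t (f x - l)) F" by blast
    then show "eventually (\<lambda>x. dist (f x) l < e) F"
      by eventually_elim (use t in \<open>auto simp: dist_eq_tabs tabs_le_powr_iff_val_ge[symmetric]\<close>)
  qed
qed

lemma Cauchy_fls_iff_val_ge:
  fixes X :: "nat \<Rightarrow> 'a::{finite,field} fls"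
  shows "Cauchy X \<longleftrightarrow> (\<forall>t. \<exists>M. \<forall>m\<ge>M. \<forall>n\<ge>M. val_ge t (X m - X n))"
proof
  assume "Cauchy X"
  show "\<forall>t. \<exists>M. \<forall>m\<ge>M. \<forall>n\<ge>M. val_ge t (X m - X n)"
  proof
    fix t
    have "0 < (2::real) powr - real_of_int (t - 1)" by simp
    then obtain M where "\<forall>m\<ge>M. \<forall>n\<ge>M. dist (X m) (X n) < 2 powr - real_of_int (t - 1)"
      using \<open>Cauchy X\<close> unfolding Cauchy_def by blast
    then show "\<exists>M. \<forall>m\<ge>M. \<forall>n\<ge>M. val_ge t (X m - X n)"
      using tabs_less_powr_imp_val_ge[of _ "t - 1"] by (auto simp: dist_eq_tabs)
  qed
next
  assume val: "\<forall>t. \<exists>M. \<forall>m\<ge>M. \<forall>n\<ge>M. val_ge t (X m - X n)"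
  show "Cauchy X"
    unfolding Cauchy_def
  proof (intro allI impI)
    fix e :: real
    assume "0 < e"
    then obtain t where t: "2 powr - real_of_int t < e" using exists_powr_less by blast
    obtain M where M: "\<forall>m\<ge>M. \<forall>n\<ge>M. val_ge t (X m - X n)" using val by blast
    have "dist (X m) (X n) < e" if "m \<ge> M" "n \<ge> M" for m n
    proof -
      have "tabs (X m - X n) \<le> 2 powr - real_of_int t"
        using M that by (simp add: tabs_le_powr_iff_val_ge)
      then show ?thesis using t by (simp add: dist_eq_tabs)
    qed
    then show "\<exists>M. \<forall>m\<ge>M. \<forall>n\<ge>M. dist (X m) (X n) < e" by blast
  qed
qed

section \<open>\<open>F\<^sub>q((T))\<close> as a complete topological ring\<close>

instance fls :: ("{finite,field}") topological_ab_group_add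
proof
  fix a b :: "'a fls"
  have fst: "eventually (\<lambda>x. val_ge t (fst x - a)) (nhds a \<times>\<^sub>F nhds b)"
    and snd: "eventually (\<lambda>x. val_ge t (snd x - b)) (nhds a \<times>\<^sub>F nhds b)" for t
    using filterlim_fst[of "nhds a" "nhds b"] filterlim_snd[of "nhds b" "nhds a"]
    by (auto simp: tendsto_fls_iff_val_ge)
  have "eventually (\<lambda>x. val_ge t (fst x + snd x - (a + b))) (nhds a \<times>\<^sub>F nhds b)" for t
    using fst[of t] snd[of t]
    by eventually_elim (metis add_diff_add val_ge_add)
  then show "((\<lambda>x. fst x + snd x) \<longlongrightarrow> a + b) (nhds a \<times>\<^sub>F nhds b)"
    by (simp add: tendsto_fls_iff_val_ge)
  have "eventually (\<lambda>x. val_ge t (x - a)) (nhds a)" for t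
    using filterlim_ident[of "nhds a"] by (simp add: tendsto_fls_iff_val_ge)
  then show "(uminus \<longlongrightarrow> - a) (nhds a)"
    unfolding tendsto_fls_iff_val_ge by (simp add: val_ge_diff_commute[of _ a])
qed

instance fls :: ("{finite,field}") topological_comm_monoid_mult
proof
  fix a b :: "'a fls"
  show "((\<lambda>x. fst x * snd x) \<longlongrightarrow> a * b) (nhds a \<times>\<^sub>F nhds b)"
    unfolding tendsto_fls_iff_val_ge
  proof
    fix t
    define u where "u = \<bar>t\<bar> + \<bar>fls_subdegree a\<bar> + \<bar>fls_subdegree b\<bar>"
    have "eventually (\<lambda>x. val_ge u (fst x - a)) (nhds a \<times>\<^sub>F nhds b)"
      and "eventually (\<lambda>x. val_ge u (snd x - b)) (nhds a \<times>\<^sub>F nhds b)"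
      using filterlim_fst[of "nhds a" "nhds b"] filterlim_snd[of "nhds b" "nhds a"]
      by (auto simp: tendsto_fls_iff_val_ge)
    then show "eventually (\<lambda>x. val_ge t (fst x * snd x - a * b)) (nhds a \<times>\<^sub>F nhds b)"
    proof eventually_elim
      case (elim x)
      have "fst x * snd x - a * b = (fst x - a) * (snd x - b) + a * (snd x - b) + (fst x - a) * b"
        by (simp add: algebra_simps)
      moreover have "val_ge t ((fst x - a) * (snd x - b))"
        using val_ge_mult[OF elim] by (rule val_ge_mono) (simp add: u_def)
      moreover have "val_ge t (a * (snd x - b))"
        using val_ge_mult[OF val_ge_subdegree elim(2)] by (rule val_ge_mono) (simp add: u_def)
      moreover have "val_ge t ((fst x - a) * b)"
        using val_ge_mult[OF elim(1) val_ge_subdegree] by (rule val_ge_mono) (simp add: u_def)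
      ultimately show ?case by (simp add: val_ge_add)
    qed
  qed
qed

instance fls :: ("{finite,field}") complete_space
proof
  fix X :: "nat \<Rightarrow> 'a fls"
  assume "Cauchy X"
  then obtain M where M: "\<And>t m n. M t \<le> m \<Longrightarrow> M t \<le> n \<Longrightarrow> val_ge t (X m - X n)"
    unfolding Cauchy_fls_iff_val_ge by metis
  text \<open>Each coefficient is eventually constant, and these limits vanish below \<open>s\<close>.\<close>
  have same_nth: "X m $$ i = X n $$ i" if "M t \<le> m" "M t \<le> n" "i < t" for t m n i
    using M[OF that(1,2)] that(3) by (simp add: val_ge_def)
  have stable: "X n $$ i = X (M (i + 1)) $$ i" if "M t \<le> n" "i < t" for t n i
  proof -
    define m where "m = max n (M (i + 1))"
    have "X n $$ i = X m $$ i" using that by (intro same_nth[of t]) (auto simp: m_def)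
    also have "\<dots> = X (M (i + 1)) $$ i" by (intro same_nth[of "i + 1"]) (auto simp: m_def)
    finally show ?thesis .
  qed
  define s where "s = min 0 (fls_subdegree (X (M 0)))"
  have below: "X (M (i + 1)) $$ i = 0" if "i < s" for i
    using stable[of 0 "M 0" i] that by (simp add: s_def)
  define L where "L = fls_shift (- s) (fps_to_fls (Abs_fps (\<lambda>k. X (M (int k + s + 1)) $$ (int k + s))))"
  have L_nth: "L $$ i = X (M (i + 1)) $$ i" for i
    using below[of i] by (cases "i < s") (simp_all add: L_def)
  have "X \<longlonglongrightarrow> L"
    unfolding tendsto_fls_iff_val_ge eventually_sequentially
    using stable by (auto simp: val_ge_def L_nth)
  then show "convergent X" by (rule convergentI)
qed

lemma fls_limit_of_val_ge_steps:
  fixes X :: "nat \<Rightarrow> 'a::{finite,field} fls"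
  assumes step: "\<And>I. val_ge (t + int I) (X (Suc I) - X I)"
  obtains L where "\<And>I. val_ge (t + int I) (L - X I)"
proof -
  have tail: "val_ge (t + int I) (X n - X I)" if "I \<le> n" for I n
    using that
  proof (induction n rule: dec_induct)
    case (step n)
    have "val_ge (t + int I) (X (Suc n) - X n)"
      using assms[of n] by (rule val_ge_mono) (use step.hyps in simp)
    then show ?case
      using val_ge_add[OF _ step.IH] by (metis diff_add_cancel add_diff_eq)
  qed simp
  have "Cauchy X"
    unfolding Cauchy_fls_iff_val_ge
  proof
    fix s
    define M where "M = nat (s - t)"
    have "val_ge s (X m - X n)" if "M \<le> m" "M \<le> n" for m n
    proof -
      have "val_ge (t + int M) ((X m - X M) - (X n - X M))"
        using that by (intro val_ge_diff tail)
      then have "val_ge (t + int M) (X m - X n)" by simp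
      then show ?thesis by (rule val_ge_mono) (simp add: M_def)
    qed
    then show "\<exists>M. \<forall>m\<ge>M. \<forall>n\<ge>M. val_ge s (X m - X n)" by blast
  qed
  then obtain L where "X \<longlonglongrightarrow> L"
    using Cauchy_convergent_iff convergent_def by blast
  have "val_ge (t + int I) (L - X I)" for I
  proof -
    obtain N where N: "\<And>n. N \<le> n \<Longrightarrow> val_ge (t + int I) (X n - L)"
      using \<open>X \<longlonglongrightarrow> L\<close> unfolding tendsto_fls_iff_val_ge eventually_sequentially by blast
    have "val_ge (t + int I) ((X (max I N) - X I) - (X (max I N) - L))"
      by (intro val_ge_diff tail N) auto
    then show ?thesis by simp
  qed
  then show ?thesis by (rule that)
qed

section \<open>The valuation ring \<open>O\<close>\<close>

lemma Oring_iff_val_ge: "x \<in> Oring \<longleftrightarrow> val_ge 0 x"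
  unfolding Oring_def by (cases "x = 0") (auto simp: val_ge_iff_le_subdegree)

lemma Oring_eq_cball: "Oring = cball (0::'a::{finite,field} fls) 1"
proof (intro set_eqI)
  fix x :: "'a fls"
  show "x \<in> Oring \<longleftrightarrow> x \<in> cball 0 1"
    using tabs_le_powr_iff_val_ge[of x 0] by (simp add: Oring_iff_val_ge dist_eq_tabs)
qed

lemma zero_in_Oring [simp]: "0 \<in> Oring"
  by (simp add: Oring_def)

lemma one_in_Oring [simp]: "1 \<in> Oring"
  by (simp add: Oring_def)

lemma Oring_mult: "x \<in> Oring \<Longrightarrow> y \<in> Oring \<Longrightarrow> x * y \<in> Oring"
  using val_ge_mult[of 0 x 0 y] by (simp add: Oring_iff_val_ge)

lemma Oring_prod: "(\<And>i. i \<in> A \<Longrightarrow> f i \<in> Oring) \<Longrightarrow> prod f A \<in> Oring"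
  by (induction A rule: infinite_finite_induct) (auto simp: Oring_mult)

lemma Oring_power: "x \<in> Oring \<Longrightarrow> x ^ k \<in> Oring"
  by (induction k) (auto simp: Oring_mult)

lemma tabs_le_1_if_Oring: "x \<in> Oring \<Longrightarrow> tabs x \<le> 1"
  using tabs_le_powr_iff_val_ge[of x 0] by (simp add: Oring_iff_val_ge)

lemma nth_0_mult_Oring: "x \<in> Oring \<Longrightarrow> y \<in> Oring \<Longrightarrow> (x * y) $$ 0 = x $$ 0 * y $$ 0"
  using fls_times_nth_val_ge[of 0 x 0 y] by (simp add: Oring_iff_val_ge)

lemma nth_0_power_Oring: "x \<in> Oring \<Longrightarrow> (x ^ k) $$ 0 = (x $$ 0) ^ k"
  by (induction k) (auto simp: nth_0_mult_Oring Oring_power)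

lemma nth_0_prod_Oring: "(\<And>i. i \<in> A \<Longrightarrow> f i \<in> Oring) \<Longrightarrow> prod f A $$ 0 = (\<Prod>i\<in>A. f i $$ 0)"
  by (induction A rule: infinite_finite_induct) (auto simp: nth_0_mult_Oring Oring_prod)

definition digit_vectors :: "nat \<Rightarrow> (nat \<Rightarrow> 'a) set" where
  "digit_vectors k = PiE {..<k} (\<lambda>_. UNIV)"

definition digit_vector :: "nat \<Rightarrow> 'a::zero fls \<Rightarrow> nat \<Rightarrow> 'a" where
  "digit_vector k x = restrict (\<lambda>i. x $$ int i) {..<k}"

text \<open>\<open>poly_of_digits k (digit_vector k x)\<close> is the truncation of \<open>x\<close> modulo \<open>T\<^sup>k\<close>.\<close>
definition poly_of_digits :: "nat \<Rightarrow> (nat \<Rightarrow> 'a) \<Rightarrow> 'a::zero fls" where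
  "poly_of_digits k d = fps_to_fls (Abs_fps (\<lambda>i. if i < k then d i else 0))"

lemma finite_digit_vectors: "finite (digit_vectors k :: (nat \<Rightarrow> 'a::finite) set)"
  by (simp add: digit_vectors_def finite_PiE)

lemma card_digit_vectors: "card (digit_vectors k :: (nat \<Rightarrow> 'a::finite) set) = CARD('a) ^ k"
  by (simp add: digit_vectors_def card_PiE)

lemma digit_vector_in_digit_vectors: "digit_vector k x \<in> digit_vectors k"
  by (simp add: digit_vector_def digit_vectors_def)

lemma poly_of_digits_in_Oring: "poly_of_digits k d \<in> Oring"
  by (simp add: poly_of_digits_def Oring_def fls_subdegree_fls_to_fps_gt0)

lemma digit_vector_poly_of_digits: "d \<in> digit_vectors k \<Longrightarrow> digit_vector k (poly_of_digits k d) = d"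
  unfolding digit_vector_def poly_of_digits_def digit_vectors_def by (auto simp: PiE_def extensional_def)

lemma val_ge_diff_poly_of_digit_vector:
  "x \<in> Oring \<Longrightarrow> val_ge (int k) (x - poly_of_digits k (digit_vector k x))"
  unfolding Oring_iff_val_ge by (auto simp: val_ge_def poly_of_digits_def digit_vector_def)

lemma compact_Oring: "compact (Oring :: 'a::{finite,field} fls set)"
  unfolding compact_eq_totally_bounded
proof (intro conjI allI impI)
  show "complete (Oring :: 'a fls set)"
    by (simp add: Oring_eq_cball complete_eq_closed)
next
  fix e :: real
  assume "0 < e"
  then obtain t where t: "2 powr - real_of_int t < e" using exists_powr_less by blast
  define K where "K = (poly_of_digits (nat t) ` digit_vectors (nat t) :: 'a fls set)"
  have "x \<in> (\<Union>y\<in>K. ball y e)" if x: "x \<in> Oring" for x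
  proof -
    have "val_ge t (x - poly_of_digits (nat t) (digit_vector (nat t) x))"
      using val_ge_diff_poly_of_digit_vector[OF x] by (rule val_ge_mono) simp
    then have "x \<in> ball (poly_of_digits (nat t) (digit_vector (nat t) x)) e"
      using t by (simp add: dist_commute dist_eq_tabs flip: tabs_le_powr_iff_val_ge)
    moreover have "poly_of_digits (nat t) (digit_vector (nat t) x) \<in> K"
      by (simp add: K_def digit_vector_in_digit_vectors)
    ultimately show ?thesis by blast
  qed
  moreover have "finite K"
    by (simp add: K_def finite_digit_vectors)
  ultimately show "\<exists>K. finite K \<and> (Oring :: 'a fls set) \<subseteq> (\<Union>y\<in>K. ball y e)"
    by blast
qed

lemma continuous_on_Oring_val_ge_bound:
  assumes "continuous_on Oring f"
  obtains t where "\<And>x. x \<in> Oring \<Longrightarrow> val_ge t (f x :: 'a::{finite,field} fls)"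
proof -
  have "bounded (f ` Oring)"
    by (intro compact_imp_bounded compact_continuous_image assms compact_Oring)
  then obtain e where e: "\<And>x. x \<in> Oring \<Longrightarrow> tabs (f x) \<le> e"
    unfolding bounded_any_center[where a=0] by (auto simp: dist_eq_tabs)
  obtain K :: nat where "e < 2 ^ K" using real_arch_pow[of 2 e] by auto
  then have "val_ge (- int K) (f x)" if "x \<in> Oring" for x
    using e[OF that] by (simp add: powr_realpow flip: tabs_le_powr_iff_val_ge)
  then show ?thesis by (rule that)
qed

lemma continuous_on_Oring_uniformly_val_ge:
  assumes "continuous_on Oring f"
  obtains k :: nat where "\<And>x x'. x \<in> Oring \<Longrightarrow> x' \<in> Oring \<Longrightarrow> val_ge (int k) (x' - x) \<Longrightarrow>
    val_ge t (f x' - f x :: 'a::{finite,field} fls)"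
proof -
  have "uniformly_continuous_on Oring f"
    by (rule compact_uniformly_continuous[OF assms compact_Oring])
  moreover have "(0::real) < 2 powr - real_of_int (t - 1)" by simp
  ultimately obtain d where "d > 0" and d: "\<forall>x\<in>Oring. \<forall>x'\<in>Oring.
      dist x' x < d \<longrightarrow> dist (f x') (f x) < 2 powr - real_of_int (t - 1)"
    unfolding uniformly_continuous_on_def by blast
  obtain s where s: "2 powr - real_of_int s < d" using exists_powr_less \<open>d > 0\<close> by blast
  have "val_ge t (f x' - f x)"
    if "x \<in> Oring" "x' \<in> Oring" "val_ge (int (nat s)) (x' - x)" for x x'
  proof -
    have "val_ge s (x' - x)"
      using that(3) by (rule val_ge_mono) simp
    then have "dist x' x < d"
      using s by (simp add: dist_eq_tabs flip: tabs_le_powr_iff_val_ge)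
    then have "tabs (f x' - f x) < 2 powr - real_of_int (t - 1)"
      using d that(1,2) by (simp only: dist_eq_tabs)
    then show ?thesis
      using tabs_less_powr_imp_val_ge by fastforce
  qed
  then show ?thesis by (rule that)
qed

section \<open>Digit monomials\<close>

lemma two_le_card_field: "2 \<le> CARD('a::{finite,field})"
proof -
  have "card {0::'a, 1} \<le> CARD('a)" by (rule card_mono) auto
  then show ?thesis by simp
qed

lemma less_card_power: "n < CARD('a::{finite,field}) ^ n"
  using two_le_card_field[where 'a='a] less_exp[of n] power_mono[of 2 "CARD('a)" n] by linarith

lemma power_card_minus_1_eq_1:
  fixes x :: "'a::{finite,field}"
  assumes "x \<noteq> 0"
  shows "x ^ (CARD('a) - 1) = 1"
proof -
  have "(\<Prod>y\<in>UNIV - {0}. x * y) = (\<Prod>y\<in>UNIV - {0::'a}. y)"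
    by (rule prod.reindex_bij_witness[of _ "\<lambda>y. y / x" "\<lambda>y. x * y"]) (use assms in auto)
  then have "x ^ card (UNIV - {0::'a}) * (\<Prod>y\<in>UNIV - {0::'a}. y) = 1 * (\<Prod>y\<in>UNIV - {0::'a}. y)"
    by (simp add: prod.distrib)
  then show ?thesis by (simp add: card_Diff_singleton)
qed

lemma power_card_eq_self: "(x::'a::{finite,field}) ^ CARD('a) = x"
proof (cases "x = 0")
  case False
  have "x ^ CARD('a) = x * x ^ (CARD('a) - 1)"
    using two_le_card_field[where 'a='a] by (simp flip: power_Suc)
  then show ?thesis using power_card_minus_1_eq_1[OF False] by simp
qed simp

lemma power_card_power_eq_self: "(x::'a::{finite,field}) ^ (CARD('a) ^ m) = x"
proof (induction m)
  case (Suc m)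
  have "x ^ (CARD('a) ^ Suc m) = (x ^ (CARD('a) ^ m)) ^ CARD('a)"
    by (simp add: power_mult[symmetric] mult.commute)
  then show ?case using Suc power_card_eq_self by simp
qed simp

text \<open>Lagrange interpolation: every function on \<open>F\<^sub>q\<close> is a polynomial function of degree \<open>< q\<close>.\<close>
lemma function_eq_sum_powers:
  fixes \<psi> :: "'a::{finite,field} \<Rightarrow> 'a"
  shows "\<exists>b. \<forall>t. \<psi> t = (\<Sum>i<CARD('a). b i * t ^ i)"
proof -
  let ?q = "CARD('a)"
  define p where "p = (\<Sum>e\<in>UNIV. smult (\<psi> e) (1 - [:- e, 1:] ^ (?q - 1)))"
  have poly_p: "poly p t = \<psi> t" for t
  proof -
    have "(t - e) ^ (?q - 1) = (if t = e then 0 else 1)" for e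
      using power_card_minus_1_eq_1[of "t - e"] two_le_card_field[where 'a='a] by simp
    then have "poly p t = (\<Sum>e\<in>UNIV. if t = e then \<psi> e else 0)"
      unfolding p_def poly_sum by (intro sum.cong) auto
    then show ?thesis by simp
  qed
  have "degree p < ?q"
    unfolding p_def
  proof (intro degree_sum_less)
    fix e :: 'a
    have "degree (smult (\<psi> e) (1 - [:- e, 1:] ^ (?q - 1))) \<le> ?q - 1"
      by (intro order.trans[OF degree_smult_le] order.trans[OF degree_diff_le]) (auto simp: degree_linear_power)
    then show "degree (smult (\<psi> e) (1 - [:- e, 1:] ^ (?q - 1))) < ?q"
      using two_le_card_field[where 'a='a] by linarith
  qed simp
  then have "poly p t = (\<Sum>i<?q. coeff p i * t ^ i)" for t
    unfolding poly_altdef by (intro sum.mono_neutral_left) (auto simp: coeff_eq_0)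
  then have "\<forall>t. \<psi> t = (\<Sum>i<?q. coeff p i * t ^ i)"
    by (metis poly_p)
  then show ?thesis by (rule exI[of _ "coeff p"])
qed

lemma digit_add_mult_power_less:
  assumes "j < q ^ k" "n < k"
  shows "digit q (j + i * q ^ k) n = digit q j n"
proof -
  have "k = (k - n - 1) + 1 + n" using assms(2) by simp
  then have qk: "i * q ^ k = (q * (i * q ^ (k - n - 1))) * q ^ n"
    by (metis mult.assoc mult.commute power_add power_one_right)
  have "q \<noteq> 0"
  proof
    assume "q = 0"
    with assms show False by (cases k) auto
  qed
  then have "(j + i * q ^ k) div q ^ n = q * (i * q ^ (k - n - 1)) + j div q ^ n"
    unfolding qk by simp
  then show ?thesis by (simp add: digit_def)
qed

lemma digit_add_mult_power_eq:
  assumes "j < q ^ k" "i < q"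
  shows "digit q (j + i * q ^ k) k = i"
proof -
  have "(j + i * q ^ k) div q ^ k = i" using assms by simp
  then show ?thesis using assms(2) by (simp add: digit_def)
qed

lemma digit_eq_0_if_less_power:
  assumes "j < q ^ k" "k \<le> n"
  shows "digit q j n = 0"
proof (cases "q = 0")
  case False
  then have "q ^ k \<le> q ^ n" using assms(2) by (simp add: power_increasing)
  then show ?thesis using assms(1) by (simp add: digit_def)
qed (use assms in \<open>cases k; cases n; simp add: digit_def\<close>)

definition digit_monomial :: "nat \<Rightarrow> nat \<Rightarrow> (nat \<Rightarrow> 'a) \<Rightarrow> 'a::{finite,field}" where
  "digit_monomial k j d = (\<Prod>n<k. d n ^ digit CARD('a) j n)"

lemma digit_monomial_cong: "(\<And>n. n < k \<Longrightarrow> d n = d' n) \<Longrightarrow> digit_monomial k j d = digit_monomial k j d'"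
  unfolding digit_monomial_def by (rule prod.cong) auto

lemma digit_monomial_Suc:
  assumes "j < CARD('a) ^ k" "i < CARD('a)"
  shows "digit_monomial (Suc k) (j + i * CARD('a) ^ k) (d :: nat \<Rightarrow> 'a::{finite,field}) =
    digit_monomial k j d * d k ^ i"
proof -
  have "digit CARD('a) (j + i * CARD('a) ^ k) n = digit CARD('a) j n" if "n < k" for n
    using assms(1) that by (rule digit_add_mult_power_less)
  then show ?thesis
    using digit_add_mult_power_eq[OF assms] by (simp add: digit_monomial_def)
qed

lemma digit_monomials_span:
  fixes \<phi> :: "(nat \<Rightarrow> 'a::{finite,field}) \<Rightarrow> 'a"
  shows "\<exists>c. \<forall>d\<in>digit_vectors k. \<phi> d = (\<Sum>j<CARD('a) ^ k. c j * digit_monomial k j d)"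
proof (induction k arbitrary: \<phi>)
  case 0
  show ?case
    by (intro exI[of _ "\<lambda>_. \<phi> (\<lambda>_. undefined)"]) (simp add: digit_monomial_def digit_vectors_def)
next
  case (Suc k)
  let ?q = "CARD('a)"
  text \<open>Expand in the first \<open>k\<close> digits for each value of digit \<open>k\<close>, then interpolate in that digit.\<close>
  have "\<forall>e. \<exists>c. \<forall>d\<in>digit_vectors k. \<phi> (d(k := e)) = (\<Sum>j<?q ^ k. c j * digit_monomial k j d)"
    by (intro allI Suc.IH)
  then obtain C where C: "\<forall>e. \<forall>d\<in>digit_vectors k.
      \<phi> (d(k := e)) = (\<Sum>j<?q ^ k. C e j * digit_monomial k j d)"
    by metis
  have "\<forall>j. \<exists>b. \<forall>t. C t j = (\<Sum>i<?q. b i * t ^ i)"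
    by (intro allI function_eq_sum_powers)
  then obtain B where B: "\<forall>j t. C t j = (\<Sum>i<?q. B j i * t ^ i)"
    by metis
  define c where "c j = B (j mod ?q ^ k) (j div ?q ^ k)" for j
  have "\<phi> d = (\<Sum>j<?q ^ Suc k. c j * digit_monomial (Suc k) j d)" if d: "d \<in> digit_vectors (Suc k)" for d
  proof -
    have "d(k := undefined) \<in> digit_vectors k"
      using d by (auto simp: digit_vectors_def PiE_def extensional_def)
    moreover have "digit_monomial k j (d(k := undefined)) = digit_monomial k j d" for j
      by (rule digit_monomial_cong) simp
    ultimately have "\<phi> d = (\<Sum>j<?q ^ k. C (d k) j * digit_monomial k j d)"
      using C[rule_format, of "d(k := undefined)" "d k"] by simp
    also have "\<dots> = (\<Sum>j<?q ^ k. \<Sum>i<?q. B j i * digit_monomial (Suc k) (j + i * ?q ^ k) d)"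
      by (intro sum.cong refl)
        (simp add: B sum_distrib_left sum_distrib_right digit_monomial_Suc mult_ac)
    also have "\<dots> = (\<Sum>i<?q. \<Sum>j<?q ^ k. c (j + i * ?q ^ k) * digit_monomial (Suc k) (j + i * ?q ^ k) d)"
      by (subst sum.swap) (intro sum.cong refl, simp add: c_def)
    also have "\<dots> = (\<Sum>j<?q * ?q ^ k. c j * digit_monomial (Suc k) j d)"
      by (rule sum_mult_product[symmetric])
    finally show ?thesis by simp
  qed
  then show ?case by blast
qed

text \<open>Counting: the \<open>q\<^sup>k\<close> digit monomials span the \<open>q\<^sup>k\<close>-dimensional space of functions
  \<open>F\<^sub>q\<^sup>k \<rightarrow> F\<^sub>q\<close>, so they are independent.\<close>
lemma digit_monomials_independent:
  fixes c :: "nat \<Rightarrow> 'a::{finite,field}"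
  assumes "\<forall>d\<in>digit_vectors k. (\<Sum>j<CARD('a) ^ k. c j * digit_monomial k j d) = 0"
    and "j < CARD('a) ^ k"
  shows "c j = 0"
proof -
  let ?J = "{..<CARD('a) ^ k}"
  let ?A = "PiE ?J (\<lambda>_. UNIV :: 'a set)"
  let ?B = "PiE (digit_vectors k :: (nat \<Rightarrow> 'a) set) (\<lambda>_. UNIV :: 'a set)"
  define L where "L c = restrict (\<lambda>d. \<Sum>j\<in>?J. c j * digit_monomial k j d) (digit_vectors k)"
    for c :: "nat \<Rightarrow> 'a"
  have "?B \<subseteq> L ` ?A"
  proof
    fix \<phi> assume \<phi>: "\<phi> \<in> ?B"
    obtain c0 where "\<forall>d\<in>digit_vectors k. \<phi> d = (\<Sum>j\<in>?J. c0 j * digit_monomial k j d)"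
      using digit_monomials_span by blast
    moreover have "\<phi> \<in> extensional (digit_vectors k)"
      using \<phi> by (simp add: PiE_iff)
    ultimately have "L (restrict c0 ?J) d = \<phi> d" for d
      by (cases "d \<in> digit_vectors k") (simp_all add: L_def extensional_def)
    then have "\<phi> = L (restrict c0 ?J)" by auto
    moreover have "restrict c0 ?J \<in> ?A" by simp
    ultimately show "\<phi> \<in> L ` ?A" by (rule image_eqI)
  qed
  moreover have "L ` ?A \<subseteq> ?B" by (auto simp: L_def)
  ultimately have "L ` ?A = ?B" by blast
  moreover have "card ?A = card ?B"
    by (simp add: card_PiE finite_digit_vectors card_digit_vectors)
  ultimately have inj: "inj_on L ?A"
    by (intro eq_card_imp_inj_on) (simp_all add: finite_PiE)
  have "L (restrict c ?J) = L (restrict (\<lambda>_. 0) ?J)"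
    using assms(1) by (auto simp: L_def)
  then have "restrict c ?J = restrict (\<lambda>_. 0) ?J"
    using inj_on_eq_iff[OF inj] by simp
  then show ?thesis using assms(2) by (metis lessThan_iff restrict_apply')
qed

definition coeff_monomial :: "nat \<Rightarrow> 'a::{finite,field} fls \<Rightarrow> 'a" where
  "coeff_monomial j x = (\<Prod>n\<le>j. (x $$ int n) ^ digit CARD('a) j n)"

lemma coeff_monomial_eq_digit_monomial:
  assumes "j < CARD('a) ^ k"
  shows "coeff_monomial j (x :: 'a::{finite,field} fls) = digit_monomial k j (digit_vector k x)"
proof -
  let ?q = "CARD('a)"
  define h where "h n = (x $$ int n) ^ digit ?q j n" for n
  have "digit ?q j n = 0" if "k \<le> n \<or> j < n" for n
    using that assms digit_eq_0_if_less_power[of j ?q] less_card_power[where 'a='a] less_trans by blast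
  then have one: "h n = 1" if "k \<le> n \<or> j < n" for n
    using that by (simp add: h_def)
  have "prod h {..j} = prod h ({..j} \<inter> {..<k})"
    by (rule prod.mono_neutral_right) (auto intro: one)
  also have "\<dots> = prod h {..<k}"
    by (rule prod.mono_neutral_left) (auto intro: one)
  finally show ?thesis
    unfolding coeff_monomial_def digit_monomial_def h_def
    by (simp add: digit_vector_def)
qed

text \<open>By uniform continuity, the coefficient of \<open>T\<^sup>t\<close> in \<open>h(x)\<close> only depends on finitely many
  digits of \<open>x\<close>.\<close>
lemma nth_eq_combination_coeff_monomials:
  assumes h: "continuous_on Oring h"
  obtains b :: "nat \<Rightarrow> 'a::{finite,field}" and N
  where "\<And>x. x \<in> Oring \<Longrightarrow> h x $$ t = (\<Sum>j<N. b j * coeff_monomial j x)"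
proof -
  obtain k where k: "\<And>x x'. x \<in> Oring \<Longrightarrow> x' \<in> Oring \<Longrightarrow> val_ge (int k) (x' - x) \<Longrightarrow>
      val_ge (t + 1) (h x' - h x)"
    using continuous_on_Oring_uniformly_val_ge[OF h, where t="t + 1"] by blast
  obtain b where b: "\<forall>d\<in>digit_vectors k.
      h (poly_of_digits k d) $$ t = (\<Sum>j<CARD('a) ^ k. b j * digit_monomial k j d)"
    using digit_monomials_span[of k "\<lambda>d. h (poly_of_digits k d) $$ t"] by blast
  have "h x $$ t = (\<Sum>j<CARD('a) ^ k. b j * coeff_monomial j x)" if x: "x \<in> Oring" for x
  proof -
    define y where "y = poly_of_digits k (digit_vector k x)"
    have "val_ge (t + 1) (h x - h y)"
      unfolding y_def by (rule k[OF poly_of_digits_in_Oring x val_ge_diff_poly_of_digit_vector[OF x]])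
    then have "h x $$ t = h y $$ t" by (simp add: val_ge_def)
    also have "\<dots> = (\<Sum>j<CARD('a) ^ k. b j * coeff_monomial j x)"
      using b[rule_format, OF digit_vector_in_digit_vectors[of k x]]
      by (simp add: y_def coeff_monomial_eq_digit_monomial)
    finally show ?thesis .
  qed
  then show ?thesis by (rule that)
qed

section \<open>Sup norm and expansions\<close>

lemma LIMSEQ_Max_prefix_SUP:
  fixes f :: "nat \<Rightarrow> real"
  assumes bdd: "bdd_above (range f)" and nonneg: "\<And>n. 0 \<le> f n"
  shows "(\<lambda>N. Max (insert 0 (f ` {..<N}))) \<longlonglongrightarrow> (SUP n. f n)"
proof -
  define m where "m N = Max (insert 0 (f ` {..<N}))" for N
  have f_le_m: "f n \<le> m N" if "n < N" for n N
    unfolding m_def using that by (intro Max_ge) auto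
  have m_le: "m N \<le> (SUP n. f n)" for N
  proof -
    have "m N \<in> insert 0 (f ` {..<N})"
      unfolding m_def by (rule Max_in) auto
    then consider "m N = 0" | n where "m N = f n" by blast
    then show ?thesis
    proof cases
      case 1
      then show ?thesis using nonneg[of 0] cSUP_upper[OF UNIV_I bdd, of 0] by simp
    next
      case 2
      then show ?thesis using cSUP_upper[OF UNIV_I bdd, of n] by simp
    qed
  qed
  have "incseq m"
    unfolding incseq_Suc_iff m_def by (intro allI Max_mono) auto
  moreover have bdd_m: "bdd_above (range m)"
    using m_le by (intro bdd_aboveI2)
  ultimately have "m \<longlonglongrightarrow> (SUP N. m N)"
    by (intro LIMSEQ_incseq_SUP)
  moreover have "(SUP N. m N) = (SUP n. f n)"
  proof (rule antisym)
    show "(SUP N. m N) \<le> (SUP n. f n)" by (rule cSUP_least) (auto intro: m_le)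
    show "(SUP n. f n) \<le> (SUP N. m N)"
    proof (rule cSUP_least)
      fix n
      show "f n \<le> (SUP N. m N)"
        using f_le_m[of n "Suc n"] cSUP_upper[OF UNIV_I bdd_m, of "Suc n"] by simp
    qed simp
  qed
  ultimately have "m \<longlonglongrightarrow> (SUP n. f n)" by simp
  then show ?thesis unfolding m_def .
qed

lemma supnorm_le:
  assumes "\<And>x. x \<in> Oring \<Longrightarrow> tabs (h x) \<le> B"
  shows "supnorm h \<le> B"
  unfolding supnorm_def using assms zero_in_Oring by (intro cSUP_least) blast+

lemma tabs_le_supnorm:
  "bdd_above ((\<lambda>x. tabs (h x)) ` Oring) \<Longrightarrow> x \<in> Oring \<Longrightarrow> tabs (h x) \<le> supnorm h"
  unfolding supnorm_def by (rule cSUP_upper)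

lemma supnorm_nonneg: "bdd_above ((\<lambda>x. tabs (h x)) ` Oring) \<Longrightarrow> 0 \<le> supnorm h"
  using tabs_le_supnorm[of h 0] tabs_nonneg[of "h 0"] by simp

lemma bdd_above_tabs_if_continuous:
  assumes "continuous_on Oring h"
  shows "bdd_above ((\<lambda>x. tabs (h x :: 'a::{finite,field} fls)) ` Oring)"
proof -
  obtain t where "\<And>x. x \<in> Oring \<Longrightarrow> val_ge t (h x)"
    using continuous_on_Oring_val_ge_bound[OF assms] by blast
  then show ?thesis
    by (intro bdd_aboveI2[where M="2 powr - real_of_int t"]) (simp add: tabs_le_powr_iff_val_ge)
qed

lemma supnorm_add_le:
  assumes "continuous_on Oring h1" "continuous_on Oring h2"
  shows "supnorm (\<lambda>x. h1 x + h2 x) \<le> supnorm h1 + supnorm h2"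
proof (rule supnorm_le)
  fix x :: "'a fls"
  assume "x \<in> Oring"
  have "tabs (h1 x + h2 x) \<le> tabs (h1 x) + tabs (h2 x)"
    by (rule tabs_add_le)
  also have "\<dots> \<le> supnorm h1 + supnorm h2"
    using \<open>x \<in> Oring\<close> by (intro add_mono tabs_le_supnorm bdd_above_tabs_if_continuous assms)
  finally show "tabs (h1 x + h2 x) \<le> supnorm h1 + supnorm h2" .
qed

lemma supnorm_diff_le:
  assumes "continuous_on Oring h1" "continuous_on Oring h2"
  shows "supnorm (\<lambda>x. h1 x - h2 x) \<le> supnorm h1 + supnorm (h2 :: 'a::{finite,field} fls \<Rightarrow> 'a fls)"
proof (rule supnorm_le)
  fix x :: "'a fls"
  assume "x \<in> Oring"
  have "tabs (h1 x - h2 x) \<le> tabs (h1 x) + tabs (h2 x)"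
    using tabs_add_le[of "h1 x" "- h2 x"] by simp
  also have "\<dots> \<le> supnorm h1 + supnorm h2"
    using \<open>x \<in> Oring\<close> by (intro add_mono tabs_le_supnorm bdd_above_tabs_if_continuous assms)
  finally show "tabs (h1 x - h2 x) \<le> supnorm h1 + supnorm h2" .
qed

lemma abs_supnorm_diff_le:
  assumes "continuous_on Oring h1" "continuous_on Oring h2"
  shows "\<bar>supnorm h1 - supnorm h2\<bar> \<le> supnorm (\<lambda>x. h1 x - h2 x :: 'a::{finite,field} fls)"
proof -
  have "supnorm h1 \<le> supnorm h2 + supnorm (\<lambda>x. h1 x - h2 x)"
    using supnorm_add_le[of h2 "\<lambda>x. h1 x - h2 x"] assms by (simp add: continuous_on_diff)
  moreover have "supnorm (\<lambda>x. h2 x - h1 x) = supnorm (\<lambda>x. h1 x - h2 x)"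
    by (simp add: supnorm_def flip: dist_eq_tabs) (simp add: dist_commute)
  then have "supnorm h2 \<le> supnorm h1 + supnorm (\<lambda>x. h1 x - h2 x)"
    using supnorm_add_le[of h1 "\<lambda>x. h2 x - h1 x"] assms by (simp add: continuous_on_diff)
  ultimately show ?thesis by linarith
qed

lemma supnorm_tendsto_0:
  assumes "\<And>t. eventually (\<lambda>N. \<forall>x\<in>Oring. val_ge t (h N x :: 'a::{finite,field} fls)) sequentially"
  shows "(\<lambda>N. supnorm (h N)) \<longlonglongrightarrow> 0"
proof (rule tendstoI)
  fix e :: real
  assume "0 < e"
  then obtain t where t: "2 powr - real_of_int t < e" using exists_powr_less by blast
  show "eventually (\<lambda>N. dist (supnorm (h N)) 0 < e) sequentially"
    using assms[of t]
  proof eventually_elim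
    case (elim N)
    then have bound: "\<And>x. x \<in> Oring \<Longrightarrow> tabs (h N x) \<le> 2 powr - real_of_int t"
      by (simp add: tabs_le_powr_iff_val_ge)
    then have "0 \<le> supnorm (h N)"
      by (intro supnorm_nonneg bdd_aboveI2) auto
    then show ?case using supnorm_le[of "h N", OF bound] t by simp
  qed
qed

definition is_expansion ::
    "(nat \<Rightarrow> 'a::{finite,field} fls \<Rightarrow> 'a fls) \<Rightarrow> ('a fls \<Rightarrow> 'a fls) \<Rightarrow> (nat \<Rightarrow> 'a fls) \<Rightarrow> bool" where
  "is_expansion g f a \<longleftrightarrow> (\<lambda>n. tabs (a n)) \<longlonglongrightarrow> 0 \<and>
     (\<lambda>N. supnorm (\<lambda>x. f x - (\<Sum>n<N. a n * g n x))) \<longlonglongrightarrow> 0"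

lemma orthonormal_basis_iff_expansions:
  "orthonormal_basis g \<longleftrightarrow> (\<forall>n. CO (g n)) \<and>
     (\<forall>f. CO f \<longrightarrow> (\<exists>!a. is_expansion g f a) \<and>
        (\<forall>a. is_expansion g f a \<longrightarrow> supnorm f = (SUP n. tabs (a n))))"
  by (simp add: orthonormal_basis_def is_expansion_def)

lemma is_expansion_if_val_ge:
  assumes "\<And>t n. M t \<le> n \<Longrightarrow> val_ge t (a n)"
    and "\<And>t N x. M t \<le> N \<Longrightarrow> x \<in> Oring \<Longrightarrow> val_ge t (f x - (\<Sum>n<N. a n * g n x))"
  shows "is_expansion g f a"
  unfolding is_expansion_def
proof
  have "a \<longlonglongrightarrow> 0"
    unfolding tendsto_fls_iff_val_ge eventually_sequentially using assms(1) by auto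
  then show "(\<lambda>n. tabs (a n)) \<longlonglongrightarrow> 0"
    by (simp add: tabs_def tendsto_dist_iff[symmetric])
  show "(\<lambda>N. supnorm (\<lambda>x. f x - (\<Sum>n<N. a n * g n x))) \<longlonglongrightarrow> 0"
    using assms(2) by (intro supnorm_tendsto_0) (auto simp: eventually_sequentially)
qed

section \<open>Families reducing to digit monomials\<close>

locale reduction_basis =
  fixes g :: "nat \<Rightarrow> 'a::{finite,field} fls \<Rightarrow> 'a fls" and C :: "nat \<Rightarrow> 'a"
  assumes continuous_g: "\<And>j. continuous_on Oring (g j)"
    and g_in_Oring: "\<And>j x. x \<in> Oring \<Longrightarrow> g j x \<in> Oring"
    and C_nonzero: "\<And>j. C j \<noteq> 0"
    and g_nth_0: "\<And>j x. x \<in> Oring \<Longrightarrow> g j x $$ 0 = C j * coeff_monomial j x"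
begin

lemma continuous_on_combination: "continuous_on Oring (\<lambda>x. \<Sum>n<N. a n * g n x)"
  by (intro continuous_intros continuous_g)

lemma combination_nonzero_somewhere:
  assumes "n0 < N" "b n0 \<noteq> 0"
  shows "\<exists>x\<in>Oring. (\<Sum>n<N. b n * C n * coeff_monomial n x) \<noteq> 0"
proof -
  let ?q = "CARD('a)"
  have "N < ?q ^ N"
    by (rule less_card_power)
  define c where "c j = (if j < N then b j * C j else 0)" for j
  have "c n0 \<noteq> 0" "n0 < ?q ^ N"
    using assms C_nonzero \<open>N < ?q ^ N\<close> by (auto simp: c_def)
  then obtain d where d: "d \<in> digit_vectors N"
    and nz: "(\<Sum>j<?q ^ N. c j * digit_monomial N j d) \<noteq> 0"
    using digit_monomials_independent[of N c] by blast
  have "(\<Sum>j<?q ^ N. c j * digit_monomial N j d) = (\<Sum>j<N. c j * digit_monomial N j d)"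
    by (rule sum.mono_neutral_right) (use \<open>N < ?q ^ N\<close> in \<open>auto simp: c_def\<close>)
  also have "\<dots> = (\<Sum>n<N. b n * C n * coeff_monomial n (poly_of_digits N d))"
    using d coeff_monomial_eq_digit_monomial[OF less_trans[OF _ \<open>N < ?q ^ N\<close>]]
    by (intro sum.cong refl) (simp add: c_def digit_vector_poly_of_digits)
  finally have "(\<Sum>n<N. b n * C n * coeff_monomial n (poly_of_digits N d)) \<noteq> 0"
    using nz by simp
  then show ?thesis by (rule bexI[OF _ poly_of_digits_in_Oring])
qed

lemma tabs_combination_le:
  assumes "x \<in> Oring" "\<And>n. n < N \<Longrightarrow> tabs (a n) \<le> B" "0 \<le> B"
  shows "tabs (\<Sum>n<N. a n * g n x) \<le> B"
proof (rule tabs_sum_le)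
  fix n
  assume "n \<in> {..<N}"
  then have "tabs (a n) * tabs (g n x) \<le> B * 1"
    using assms g_in_Oring tabs_le_1_if_Oring tabs_nonneg by (intro mult_mono) auto
  then show "tabs (a n * g n x) \<le> B" by (simp add: tabs_mult)
qed (use assms in auto)

text \<open>The lowest-order coefficients of a finite combination reduce to a nonzero combination of
  digit monomials, which does not vanish identically on \<open>O\<close>.\<close>
lemma exists_tabs_combination_ge:
  assumes "n0 < N"
  shows "\<exists>x\<in>Oring. tabs (a n0) \<le> tabs (\<Sum>n<N. a n * g n x)"
proof (cases "a n0 = 0")
  case True
  then show ?thesis by (intro bexI[of _ 0]) (auto simp: tabs_nonneg)
next
  case False
  define V where "V = fls_subdegree ` a ` {n. n < N \<and> a n \<noteq> 0}"
  define t where "t = Min V"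
  have "finite V" "V \<noteq> {}" using False assms by (auto simp: V_def)
  then have "t \<in> V" unfolding t_def by (rule Min_in)
  then obtain n1 where n1: "n1 < N" "a n1 \<noteq> 0" "fls_subdegree (a n1) = t"
    by (auto simp: V_def)
  have "t \<le> fls_subdegree (a n)" if "n < N" "a n \<noteq> 0" for n
    unfolding t_def using \<open>finite V\<close> that by (intro Min_le) (auto simp: V_def)
  then have val_a: "val_ge t (a n)" if "n < N" for n
    using that by (cases "a n = 0") (simp_all add: val_ge_iff_le_subdegree)
  obtain x where x: "x \<in> Oring" and nz: "(\<Sum>n<N. a n $$ t * C n * coeff_monomial n x) \<noteq> 0"
    using combination_nonzero_somewhere[of n1 N "\<lambda>n. a n $$ t"] n1 by auto
  define S where "S = (\<Sum>n<N. a n * g n x)"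
  have g0: "val_ge 0 (g n x)" for n
    using g_in_Oring[OF x] by (simp add: Oring_iff_val_ge)
  have "val_ge t (a n * g n x)" if "n < N" for n
    using val_ge_mult[OF val_a[OF that] g0] by simp
  then have "val_ge t S"
    unfolding S_def by (intro val_ge_sum) simp
  moreover have "(a n * g n x) $$ t = a n $$ t * C n * coeff_monomial n x" if "n < N" for n
    using fls_times_nth_val_ge[OF val_a[OF that] g0] g_nth_0[OF x] by (simp add: mult.assoc)
  then have "S $$ t = (\<Sum>n<N. a n $$ t * C n * coeff_monomial n x)"
    unfolding S_def fls_nth_sum by (intro sum.cong) simp_all
  ultimately have "tabs S = 2 powr - real_of_int t"
    using nz by (intro tabs_eq_powr_if_nth_nonzero) simp_all
  moreover have "tabs (a n0) \<le> 2 powr - real_of_int t"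
    using val_a[OF assms] by (simp add: tabs_le_powr_iff_val_ge)
  ultimately have "tabs (a n0) \<le> tabs S" by simp
  then show ?thesis
    unfolding S_def by (rule bexI[OF _ x])
qed

lemma supnorm_combination:
  "supnorm (\<lambda>x. \<Sum>n<N. a n * g n x) = Max (insert 0 ((\<lambda>n. tabs (a n)) ` {..<N}))"
  (is "_ = ?M")
proof (rule antisym)
  have "tabs (a n) \<le> ?M" if "n < N" for n
    using that by (intro Max_ge) auto
  moreover have "0 \<le> ?M" by (intro Max_ge) auto
  ultimately show "supnorm (\<lambda>x. \<Sum>n<N. a n * g n x) \<le> ?M"
    by (intro supnorm_le tabs_combination_le)
  have bdd: "bdd_above ((\<lambda>x. tabs (\<Sum>n<N. a n * g n x)) ` Oring)"
    by (intro bdd_above_tabs_if_continuous continuous_on_combination)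
  have "?M \<in> insert 0 ((\<lambda>n. tabs (a n)) ` {..<N})"
    by (rule Max_in) auto
  then consider "?M = 0" | n where "n < N" "?M = tabs (a n)" by blast
  then show "?M \<le> supnorm (\<lambda>x. \<Sum>n<N. a n * g n x)"
  proof cases
    case 1
    then show ?thesis using supnorm_nonneg[OF bdd] by simp
  next
    case (2 n)
    then obtain x where "x \<in> Oring" "?M \<le> tabs (\<Sum>n<N. a n * g n x)"
      using exists_tabs_combination_ge by metis
    then show ?thesis using tabs_le_supnorm[OF bdd] order_trans by blast
  qed
qed

lemma supnorm_eq_SUP_if_expansion:
  assumes f: "continuous_on Oring f" and a: "is_expansion g f a"
  shows "supnorm f = (SUP n. tabs (a n))"
proof -
  define M where "M N = Max (insert 0 ((\<lambda>n. tabs (a n)) ` {..<N}))" for N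
  have "(\<lambda>N. supnorm f - M N) \<longlonglongrightarrow> 0"
  proof (rule Lim_null_comparison)
    show "eventually (\<lambda>N. norm (supnorm f - M N) \<le> supnorm (\<lambda>x. f x - (\<Sum>n<N. a n * g n x))) sequentially"
      using abs_supnorm_diff_le[OF f continuous_on_combination]
      by (intro always_eventually) (simp add: M_def supnorm_combination)
    show "(\<lambda>N. supnorm (\<lambda>x. f x - (\<Sum>n<N. a n * g n x))) \<longlonglongrightarrow> 0"
      using a by (simp add: is_expansion_def)
  qed
  then have "(\<lambda>N. supnorm f - (supnorm f - M N)) \<longlonglongrightarrow> supnorm f - 0"
    by (intro tendsto_diff tendsto_const)
  then have "M \<longlonglongrightarrow> supnorm f" by simp
  moreover have "M \<longlonglongrightarrow> (SUP n. tabs (a n))"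
  proof -
    have "(\<lambda>n. tabs (a n)) \<longlonglongrightarrow> 0"
      using a by (simp add: is_expansion_def)
    then have "bdd_above (range (\<lambda>n. tabs (a n)))"
      by (rule bounded_imp_bdd_above[OF convergent_imp_bounded])
    then show ?thesis
      unfolding M_def by (rule LIMSEQ_Max_prefix_SUP[OF _ tabs_nonneg])
  qed
  ultimately show ?thesis by (rule LIMSEQ_unique)
qed

lemma expansion_unique:
  assumes f: "continuous_on Oring f" and "is_expansion g f a" "is_expansion g f a'"
  shows "a = a'"
proof
  fix n
  define R where "R a N x = f x - (\<Sum>n<N. a n * g n x)" for a N x
  have R_cont: "continuous_on Oring (R b N)" for b N
    unfolding R_def by (intro continuous_intros f continuous_on_combination)
  have "tabs (a n - a' n) \<le> supnorm (R a' N) + supnorm (R a N)" if "n < N" for N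
  proof -
    have "tabs (a n - a' n) \<le> supnorm (\<lambda>x. \<Sum>n<N. (a n - a' n) * g n x)"
      unfolding supnorm_combination using that by (intro Max_ge) auto
    also have "(\<lambda>x. \<Sum>n<N. (a n - a' n) * g n x) = (\<lambda>x. R a' N x - R a N x)"
      by (simp add: R_def algebra_simps sum_subtractf)
    also have "supnorm \<dots> \<le> supnorm (R a' N) + supnorm (R a N)"
      by (intro supnorm_diff_le R_cont)
    finally show ?thesis .
  qed
  moreover have "(\<lambda>N. supnorm (R a' N) + supnorm (R a N)) \<longlonglongrightarrow> 0"
    using assms(2,3) unfolding is_expansion_def R_def by (intro tendsto_add_zero) simp_all
  ultimately have "tabs (a n - a' n) \<le> 0"
    by (intro LIMSEQ_le_const) (auto intro!: exI[of _ "Suc n"] simp: Suc_le_eq)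
  then show "a n = a' n" using tabs_nonneg[of "a n - a' n"] by simp
qed

text \<open>One step of successive approximation: after subtracting a combination of the \<open>g\<^sub>j\<close> with
  coefficients \<open>(b\<^sub>j / C\<^sub>j) T\<^sup>t\<close>, the coefficient of \<open>T\<^sup>t\<close> vanishes.\<close>
lemma approximation_step:
  obtains c :: "('a fls \<Rightarrow> 'a fls) \<Rightarrow> int \<Rightarrow> nat \<Rightarrow> 'a fls" and N :: "('a fls \<Rightarrow> 'a fls) \<Rightarrow> int \<Rightarrow> nat"
  where "\<And>h t. continuous_on Oring h \<Longrightarrow> \<forall>x\<in>Oring. val_ge t (h x) \<Longrightarrow>
    (\<forall>j. val_ge t (c h t j)) \<and> (\<forall>j\<ge>N h t. c h t j = 0) \<and>
    (\<forall>x\<in>Oring. val_ge (t + 1) (h x - (\<Sum>j<N h t. c h t j * g j x)))"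
proof -
  text \<open>Bundling the step into one predicate makes the choice of \<open>c\<close> and \<open>N\<close> a plain
    skolemization over \<open>h\<close> and \<open>t\<close>.\<close>
  define good where "good h t c N \<longleftrightarrow> (continuous_on Oring h \<and> (\<forall>x\<in>Oring. val_ge t (h x)) \<longrightarrow>
      (\<forall>j. val_ge t (c j)) \<and> (\<forall>j\<ge>N. c j = 0) \<and>
      (\<forall>x\<in>Oring. val_ge (t + 1) (h x - (\<Sum>j<N. c j * g j x))))"
    for h t and c :: "nat \<Rightarrow> 'a fls" and N
  have "\<exists>c N. good h t c N" for h t
  proof (cases "continuous_on Oring h \<and> (\<forall>x\<in>Oring. val_ge t (h x))")
    case True
    then obtain b N where b: "\<And>x. x \<in> Oring \<Longrightarrow> h x $$ t = (\<Sum>j<N. b j * coeff_monomial j x)"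
      using nth_eq_combination_coeff_monomials[of h t] by blast
    define c where "c j = (if j < N then fls_shift (- t) (fls_const (b j / C j)) else 0)" for j
    have val_c: "val_ge t (c j)" for j
      by (simp add: c_def val_ge_def)
    have "val_ge (t + 1) (h x - (\<Sum>j<N. c j * g j x))" if x: "x \<in> Oring" for x
    proof -
      have "(c j * g j x) $$ t = b j * coeff_monomial j x" if "j < N" for j
        using fls_times_nth_val_ge[OF val_c[of j], of 0 "g j x"] g_in_Oring[OF x] C_nonzero[of j] g_nth_0[OF x]
          that by (simp add: Oring_iff_val_ge c_def)
      then have "(h x - (\<Sum>j<N. c j * g j x)) $$ t = 0"
        by (simp add: fls_nth_sum b[OF x])
      moreover have "val_ge t (h x - (\<Sum>j<N. c j * g j x))"
        using True x val_ge_mult[OF val_c, of 0] g_in_Oring[OF x]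
        by (intro val_ge_diff val_ge_sum) (auto simp: Oring_iff_val_ge)
      ultimately show ?thesis by (intro val_ge_succ)
    qed
    then show ?thesis
      unfolding good_def using val_c by (intro exI[of _ c] exI[of _ N]) (simp add: c_def)
  qed (auto simp: good_def)
  then obtain c N where "good h t (c h t) (N h t)" for h t
    by metis
  then show ?thesis
    using that unfolding good_def by blast
qed

lemma approximating_remainders:
  assumes f: "continuous_on Oring f" and val_f: "\<And>x. x \<in> Oring \<Longrightarrow> val_ge t0 (f x)"
  obtains R :: "nat \<Rightarrow> 'a fls \<Rightarrow> 'a fls" and c :: "nat \<Rightarrow> nat \<Rightarrow> 'a fls" and N :: "nat \<Rightarrow> nat"
  where "R 0 = f" and "\<And>I x. R (Suc I) x = R I x - (\<Sum>j<N I. c I j * g j x)"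
    and "\<And>I j. val_ge (t0 + int I) (c I j)" and "\<And>I j. N I \<le> j \<Longrightarrow> c I j = 0"
    and "\<And>I x. x \<in> Oring \<Longrightarrow> val_ge (t0 + int I) (R I x)"
proof -
  obtain c N where step: "\<And>h t. continuous_on Oring h \<Longrightarrow> \<forall>x\<in>Oring. val_ge t (h x) \<Longrightarrow>
      (\<forall>j. val_ge t (c h t j)) \<and> (\<forall>j\<ge>N h t. c h t j = 0) \<and>
      (\<forall>x\<in>Oring. val_ge (t + 1) (h x - (\<Sum>j<N h t. c h t j * g j x)))"
    using approximation_step by blast
  define R where "R = rec_nat f (\<lambda>I h x. h x - (\<Sum>j<N h (t0 + int I). c h (t0 + int I) j * g j x))"
  define cs where "cs I = c (R I) (t0 + int I)" for I
  define Ns where "Ns I = N (R I) (t0 + int I)" for I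
  have R_Suc: "R (Suc I) x = R I x - (\<Sum>j<Ns I. cs I j * g j x)" for I x
    by (simp add: R_def cs_def Ns_def)
  have R: "continuous_on Oring (R I) \<and> (\<forall>x\<in>Oring. val_ge (t0 + int I) (R I x))" for I
  proof (induction I)
    case 0
    then show ?case using f val_f by (simp add: R_def)
  next
    case (Suc I)
    have "continuous_on Oring (R (Suc I))"
      unfolding R_Suc[abs_def] using Suc by (intro continuous_intros continuous_g) simp
    moreover have "val_ge (t0 + int I + 1) (R (Suc I) x)" if "x \<in> Oring" for x
      using step[of "R I" "t0 + int I"] Suc that by (simp add: R_Suc cs_def Ns_def)
    ultimately show ?case by (simp add: add_ac)
  qed
  show ?thesis
  proof (rule that)
    show "R 0 = f" by (simp add: R_def)
    show "val_ge (t0 + int I) (cs I j)" "Ns I \<le> j \<Longrightarrow> cs I j = 0" for I j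
      using R step[of "R I" "t0 + int I"] by (simp_all add: cs_def Ns_def)
  qed (use R R_Suc in blast)+
qed

lemma approximating_combinations:
  assumes f: "continuous_on Oring f" and val_f: "\<And>x. x \<in> Oring \<Longrightarrow> val_ge t0 (f x)"
  obtains A :: "nat \<Rightarrow> nat \<Rightarrow> 'a fls" and M :: "nat \<Rightarrow> nat"
  where "\<And>I j. val_ge (t0 + int I) (A (Suc I) j - A I j)"
    and "\<And>I j. M I \<le> j \<Longrightarrow> A I j = 0"
    and "\<And>I x. x \<in> Oring \<Longrightarrow> val_ge (t0 + int I) (f x - (\<Sum>j<M I. A I j * g j x))"
proof -
  obtain R c N where R_0: "R 0 = f" and R_Suc: "\<And>I x. R (Suc I) x = R I x - (\<Sum>j<N I. c I j * g j x)"
    and val_c: "\<And>I j. val_ge (t0 + int I) (c I j)" and c_zero: "\<And>I j. N I \<le> j \<Longrightarrow> c I j = 0"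
    and val_R: "\<And>I x. x \<in> Oring \<Longrightarrow> val_ge (t0 + int I) (R I x)"
    using approximating_remainders[OF f val_f] by blast
  define A where "A I j = (\<Sum>i<I. c i j)" for I j
  define M where "M I = (\<Sum>i<I. N i)" for I
  have A_zero: "A I j = 0" if "M I \<le> j" for I j
    unfolding A_def
  proof (rule sum.neutral, rule ballI)
    fix i
    assume "i \<in> {..<I}"
    then have "N i \<le> M I" unfolding M_def by (intro member_le_sum) auto
    then show "c i j = 0" using that by (intro c_zero) simp
  qed
  have remainder: "f x - (\<Sum>j<M I. A I j * g j x) = R I x" for I x
  proof (induction I)
    case (Suc I)
    have "(\<Sum>j<M (Suc I). A I j * g j x) = (\<Sum>j<M I. A I j * g j x)"
      by (rule sum.mono_neutral_right) (auto simp: A_zero M_def)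
    moreover have "(\<Sum>j<M (Suc I). c I j * g j x) = (\<Sum>j<N I. c I j * g j x)"
      by (rule sum.mono_neutral_right) (auto simp: c_zero M_def)
    moreover have "(\<Sum>j<M (Suc I). A (Suc I) j * g j x) =
        (\<Sum>j<M (Suc I). A I j * g j x) + (\<Sum>j<M (Suc I). c I j * g j x)"
      by (simp add: A_def distrib_right sum.distrib)
    ultimately show ?case
      using Suc by (simp add: R_Suc)
  qed (simp add: R_0 M_def)
  show ?thesis
  proof (rule that)
    show "val_ge (t0 + int I) (A (Suc I) j - A I j)" for I j
      using val_c by (simp add: A_def)
    show "A I j = 0" if "M I \<le> j" for I j
      using that by (rule A_zero)
    show "val_ge (t0 + int I) (f x - (\<Sum>j<M I. A I j * g j x))" if "x \<in> Oring" for I x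
      using val_R that by (simp add: remainder)
  qed
qed

lemma exists_expansion:
  assumes f: "continuous_on Oring f"
  shows "\<exists>a. is_expansion g f a"
proof -
  obtain t0 where val_f: "\<And>x. x \<in> Oring \<Longrightarrow> val_ge t0 (f x)"
    using continuous_on_Oring_val_ge_bound[OF f] by blast
  obtain A M where A_step: "\<And>I j. val_ge (t0 + int I) (A (Suc I) j - A I j)"
    and A_zero: "\<And>I j. M I \<le> j \<Longrightarrow> A I j = 0"
    and approx: "\<And>I x. x \<in> Oring \<Longrightarrow> val_ge (t0 + int I) (f x - (\<Sum>j<M I. A I j * g j x))"
    using approximating_combinations[OF f val_f] by blast
  have "\<exists>L. \<forall>I. val_ge (t0 + int I) (L - A I j)" for j
    by (rule fls_limit_of_val_ge_steps[of t0 "\<lambda>I. A I j"]) (use A_step in auto)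
  then obtain a where a: "\<And>I j. val_ge (t0 + int I) (a j - A I j)"
    by metis
  have approx_a: "val_ge (t0 + int I) (f x - (\<Sum>n<N. a n * g n x))"
    if "M I \<le> N" "x \<in> Oring" for I N x
  proof -
    have "(\<Sum>n<N. A I n * g n x) = (\<Sum>j<M I. A I j * g j x)"
      using that(1) by (intro sum.mono_neutral_right) (auto simp: A_zero)
    then have eq: "f x - (\<Sum>n<N. a n * g n x) =
        (f x - (\<Sum>j<M I. A I j * g j x)) + (\<Sum>n<N. (A I n - a n) * g n x)"
      by (simp add: algebra_simps sum_subtractf)
    have "val_ge (t0 + int I) ((A I n - a n) * g n x)" for n
      using val_ge_mult[of _ "A I n - a n" 0 "g n x"] a[of I n] g_in_Oring[OF that(2)]
      by (simp add: Oring_iff_val_ge val_ge_diff_commute)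
    then show ?thesis
      unfolding eq by (intro val_ge_add approx[OF that(2)] val_ge_sum)
  qed
  have small_a: "val_ge (t0 + int I) (a j)" if "M I \<le> j" for I j
    using a[of I j] A_zero[OF that] by simp
  have "is_expansion g f a"
  proof (rule is_expansion_if_val_ge[where M="\<lambda>t. M (nat (t - t0))"])
    show "val_ge t (a n)" if "M (nat (t - t0)) \<le> n" for t n
      using small_a[OF that] by (rule val_ge_mono) linarith
    show "val_ge t (f x - (\<Sum>n<N. a n * g n x))" if "M (nat (t - t0)) \<le> N" "x \<in> Oring" for t N x
      using approx_a[OF that] by (rule val_ge_mono) linarith
  qed
  then show ?thesis by blast
qed

theorem orthonormal_basis: "orthonormal_basis g"
  unfolding orthonormal_basis_iff_expansions CO_def
proof (intro conjI allI impI)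
  show "continuous_on Oring (g n)" for n
    by (rule continuous_g)
next
  fix f :: "'a fls \<Rightarrow> 'a fls"
  assume f: "continuous_on Oring f"
  show "\<exists>!a. is_expansion g f a"
    using exists_expansion[OF f] expansion_unique[OF f] by blast
next
  fix f :: "'a fls \<Rightarrow> 'a fls" and a
  assume "continuous_on Oring f" "is_expansion g f a"
  then show "supnorm f = (SUP n. tabs (a n))"
    by (rule supnorm_eq_SUP_if_expansion)
qed

end

lemma orthonormal_basis_digit_products:
  fixes E :: "nat \<Rightarrow> 'a::{finite,field} fls \<Rightarrow> 'a fls" and \<kappa> :: "nat \<Rightarrow> 'a"
  assumes continuous_E: "\<And>n. continuous_on Oring (E n)"
    and E_in_Oring: "\<And>n x. x \<in> Oring \<Longrightarrow> E n x \<in> Oring"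
    and E_nth_0: "\<And>n x. x \<in> Oring \<Longrightarrow> E n x $$ 0 = \<kappa> n * x $$ int n"
    and \<kappa>_nonzero: "\<And>n. \<kappa> n \<noteq> 0"
  shows "orthonormal_basis (\<lambda>j x. (\<Prod>n\<le>j. E n x ^ digit CARD('a) j n) ^ (CARD('a) ^ m))"
proof -
  let ?q = "CARD('a)"
  let ?P = "\<lambda>j x. \<Prod>n\<le>j. E n x ^ digit ?q j n"
  have P_in_Oring: "?P j x \<in> Oring" if "x \<in> Oring" for j x
    using that by (intro Oring_prod Oring_power E_in_Oring)
  interpret reduction_basis "\<lambda>j x. ?P j x ^ (?q ^ m)" "\<lambda>j. \<Prod>n\<le>j. \<kappa> n ^ digit ?q j n"
  proof
    show "continuous_on Oring (\<lambda>x. ?P j x ^ (?q ^ m))" for j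
      by (intro continuous_intros continuous_E)
    show "?P j x ^ (?q ^ m) \<in> Oring" if "x \<in> Oring" for j x
      using that by (intro Oring_power P_in_Oring)
    show "(\<Prod>n\<le>j. \<kappa> n ^ digit ?q j n) \<noteq> 0" for j
      using \<kappa>_nonzero by simp
  next
    fix j and x :: "'a fls"
    assume x: "x \<in> Oring"
    text \<open>Frobenius is the identity on \<open>F\<^sub>q\<close>, so the power \<open>q\<^sup>m\<close> disappears after reduction.\<close>
    have "(?P j x ^ (?q ^ m)) $$ 0 = (\<Prod>n\<le>j. (E n x $$ 0) ^ digit ?q j n)"
      using x E_in_Oring
      by (simp add: nth_0_power_Oring nth_0_prod_Oring P_in_Oring Oring_power power_card_power_eq_self)
    also have "\<dots> = (\<Prod>n\<le>j. \<kappa> n ^ digit ?q j n) * coeff_monomial j x"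
      using x by (simp add: E_nth_0 coeff_monomial_def power_mult_distrib prod.distrib)
    finally show "(?P j x ^ (?q ^ m)) $$ 0 = (\<Prod>n\<le>j. \<kappa> n ^ digit ?q j n) * coeff_monomial j x" .
  qed
  show ?thesis by (rule orthonormal_basis)
qed

section \<open>Hasse derivatives\<close>

lemma hasse_in_Oring: "hasse n x \<in> Oring"
  by (simp add: hasse_def Oring_def fls_subdegree_fls_to_fps_gt0)

lemma hasse_nth_0: "hasse n x $$ 0 = x $$ int n"
  by (simp add: hasse_def)

lemma val_ge_hasse_diff:
  assumes "val_ge (t + int n) (y - x)"
  shows "val_ge t (hasse n y - hasse n x)"
  unfolding val_ge_def
proof (intro allI impI)
  fix i
  assume "i < t"
  then have "(y - x) $$ (i + int n) = 0" using assms by (simp add: val_ge_def)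
  then show "(hasse n y - hasse n x) $$ i = 0"
    by (cases "i < 0") (simp_all add: hasse_def algebra_simps)
qed

lemma continuous_on_hasse: "continuous_on S (hasse n :: 'a::{finite,field} fls \<Rightarrow> 'a fls)"
  unfolding continuous_on_def
proof
  fix x
  have "eventually (\<lambda>y. val_ge (t + int n) (y - x)) (at x within S)" for t
    using tendsto_ident_at[of x S] by (simp add: tendsto_fls_iff_val_ge)
  then have "eventually (\<lambda>y. val_ge t (hasse n y - hasse n x)) (at x within S)" for t
    by (rule eventually_mono) (rule val_ge_hasse_diff)
  then show "(hasse n \<longlongrightarrow> hasse n x) (at x within S)"
    unfolding tendsto_fls_iff_val_ge by blast
qed

lemma orthonormal_basis_Dfun: "orthonormal_basis (\<lambda>j x. (Dfun j x :: 'a::{finite,field} fls) ^ (CARD('a) ^ m))"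
proof -
  have "orthonormal_basis (\<lambda>j (x :: 'a fls). (\<Prod>n\<le>j. hasse n x ^ digit CARD('a) j n) ^ (CARD('a) ^ m))"
    by (rule orthonormal_basis_digit_products[where \<kappa>="\<lambda>_. 1"])
      (simp_all add: continuous_on_hasse hasse_in_Oring hasse_nth_0)
  then show ?thesis by (simp add: Dfun_def)
qed

section \<open>Carlitz polynomials\<close>

lemma polys_lt_0: "polys_lt 0 = {0}"
proof (intro set_eqI iffI)
  fix p :: "'a fls"
  assume "p \<in> polys_lt 0"
  then have "p $$ i = 0" for i
    unfolding polys_lt_def by (cases "p $$ i = 0") auto
  then show "p \<in> {0}" by (simp add: fls_eq_iff)
qed (simp add: polys_lt_def)

lemma zero_in_polys_lt [simp]: "0 \<in> polys_lt n"
  by (simp add: polys_lt_def)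

lemma polys_lt_add: "m \<in> polys_lt n \<Longrightarrow> m' \<in> polys_lt n \<Longrightarrow> m + m' \<in> polys_lt n"
  unfolding polys_lt_def by (auto simp del: fls_plus_nth) (metis add.right_neutral fls_plus_nth)+

lemma polys_lt_diff: "m \<in> polys_lt n \<Longrightarrow> m' \<in> polys_lt n \<Longrightarrow> m - m' \<in> polys_lt n"
  unfolding polys_lt_def by (auto simp del: fls_minus_nth) (metis diff_zero fls_minus_nth)+

lemma subdegree_polys_lt:
  assumes "m \<in> polys_lt n" "m \<noteq> 0"
  shows "0 \<le> fls_subdegree m" "fls_subdegree m < int n"
  using assms nth_fls_subdegree_nonzero[of m] unfolding polys_lt_def by blast+

lemma poly_of_digits_in_polys_lt: "poly_of_digits n d \<in> polys_lt n"
  by (auto simp: polys_lt_def poly_of_digits_def split: if_splits)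

lemma polys_lt_Suc:
  "polys_lt (Suc n) = (\<lambda>(m, c). m + fls_shift (- int n) (fls_const c)) ` (polys_lt n \<times> UNIV)"
proof (intro set_eqI iffI)
  fix p :: "'a fls"
  assume p: "p \<in> polys_lt (Suc n)"
  define m where "m = p - fls_shift (- int n) (fls_const (p $$ int n))"
  have "m \<in> polys_lt n"
    using p unfolding polys_lt_def m_def by (auto split: if_splits)
  moreover have "p = m + fls_shift (- int n) (fls_const (p $$ int n))"
    by (simp add: m_def)
  ultimately show "p \<in> (\<lambda>(m, c). m + fls_shift (- int n) (fls_const c)) ` (polys_lt n \<times> UNIV)"
    by force
qed (auto simp: polys_lt_def split: if_splits)

lemma inj_on_polys_lt_Suc:
  "inj_on (\<lambda>(m, c). m + fls_shift (- int n) (fls_const c)) (polys_lt n \<times> UNIV)"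
proof (rule inj_onI, clarify)
  fix m m' :: "'a fls" and c c'
  assume "m \<in> polys_lt n" "m' \<in> polys_lt n"
    and eq: "m + fls_shift (- int n) (fls_const c) = m' + fls_shift (- int n) (fls_const c')"
  then have "m $$ int n = 0" "m' $$ int n = 0"
    by (auto simp: polys_lt_def)
  then have "c = c'"
    using arg_cong[OF eq, of "\<lambda>p. p $$ int n"] by simp
  then show "m = m' \<and> c = c'" using eq by simp
qed

lemma finite_polys_lt: "finite (polys_lt n :: 'a::{finite,field} fls set)"
  by (induction n) (simp_all add: polys_lt_0 polys_lt_Suc)

lemma subdegree_add_monomial:
  assumes m: "m \<in> polys_lt n"
  shows "fls_subdegree (m + fls_shift (- int n) (fls_const c)) =
    (if m = 0 \<and> c \<noteq> 0 then int n else fls_subdegree m)"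
proof (cases "m = 0")
  case True
  then show ?thesis
    by (cases "c = 0") (auto intro: fls_subdegree_eqI)
next
  case False
  have "fls_subdegree m < int n" using subdegree_polys_lt[OF m False] by simp
  then show ?thesis
    using False by (intro fls_subdegree_eqI) auto
qed

lemma sum_subdegree_polys_lt_Suc:
  "(\<Sum>m\<in>(polys_lt (Suc n) :: 'a::{finite,field} fls set). fls_subdegree m) =
    int CARD('a) * (\<Sum>m\<in>(polys_lt n :: 'a fls set). fls_subdegree m) + (int CARD('a) - 1) * int n"
  (is "?S (Suc n) = _")
proof -
  let ?q = "CARD('a)"
  let ?P = "polys_lt n :: 'a fls set"
  have "?S (Suc n) = (\<Sum>(m, c)\<in>?P \<times> UNIV. fls_subdegree (m + fls_shift (- int n) (fls_const c)))"
    unfolding polys_lt_Suc by (subst sum.reindex[OF inj_on_polys_lt_Suc]) (simp add: case_prod_beta)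
  also have "\<dots> = (\<Sum>m\<in>?P. \<Sum>c\<in>(UNIV::'a set). if m = 0 \<and> c \<noteq> 0 then int n else fls_subdegree m)"
    by (subst sum.cartesian_product[symmetric]) (intro sum.cong refl, simp add: subdegree_add_monomial)
  also have "\<dots> = (\<Sum>m\<in>?P. (if m = 0 then (int ?q - 1) * int n else 0) + int ?q * fls_subdegree m)"
  proof (intro sum.cong refl)
    fix m :: "'a fls"
    show "(\<Sum>c\<in>(UNIV::'a set). if m = 0 \<and> c \<noteq> 0 then int n else fls_subdegree m) =
        (if m = 0 then (int ?q - 1) * int n else 0) + int ?q * fls_subdegree m"
    proof (cases "m = 0")
      case True
      have "(\<Sum>c\<in>UNIV. if c \<noteq> (0::'a) then int n else 0) = (\<Sum>c\<in>UNIV - {0::'a}. int n)"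
        by (intro sum.mono_neutral_cong_right) auto
      then show ?thesis
        using True by (simp add: card_Diff_singleton of_nat_diff cong: if_cong)
    qed simp
  qed
  also have "\<dots> = (int ?q - 1) * int n + int ?q * ?S n"
    by (simp add: sum.distrib sum_distrib_left finite_polys_lt)
  finally show ?thesis by simp
qed

lemma sum_subdegree_polys_lt:
  "int n + (\<Sum>m\<in>(polys_lt n :: 'a::{finite,field} fls set). fls_subdegree m) =
    (\<Sum>i=1..n. int CARD('a) ^ (n - i))"
proof (induction n)
  case (Suc n)
  have "(\<Sum>i=1..n. int CARD('a) ^ (Suc n - i)) = int CARD('a) * (\<Sum>i=1..n. int CARD('a) ^ (n - i))"
    unfolding sum_distrib_left by (intro sum.cong refl) (simp add: Suc_diff_le)
  then have sum_Suc: "(\<Sum>i=1..Suc n. int CARD('a) ^ (Suc n - i)) =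
      1 + int CARD('a) * (\<Sum>i=1..n. int CARD('a) ^ (n - i))"
    by (simp add: atLeastAtMostSuc_conv)
  have "int (Suc n) + (\<Sum>m\<in>(polys_lt (Suc n) :: 'a fls set). fls_subdegree m) =
      1 + int CARD('a) * (int n + (\<Sum>m\<in>(polys_lt n :: 'a fls set). fls_subdegree m))"
    by (simp add: sum_subdegree_polys_lt_Suc algebra_simps)
  then show ?case
    by (simp only: Suc.IH sum_Suc)
qed (simp add: polys_lt_0)

lemma fls_prod_subdegree:
  fixes f :: "'b \<Rightarrow> 'a::idom fls"
  assumes "\<And>i. i \<in> A \<Longrightarrow> f i \<noteq> 0"
  shows "fls_subdegree (prod f A) = (\<Sum>i\<in>A. fls_subdegree (f i)) \<and>
    prod f A $$ fls_subdegree (prod f A) = (\<Prod>i\<in>A. f i $$ fls_subdegree (f i))"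
  using assms
proof (induction A rule: infinite_finite_induct)
  case (insert a A)
  then have "f a \<noteq> 0" "prod f A \<noteq> 0" by (simp_all add: prod_zero_iff)
  moreover obtain sd: "fls_subdegree (prod f A) = (\<Sum>i\<in>A. fls_subdegree (f i))"
    and lc: "prod f A $$ fls_subdegree (prod f A) = (\<Prod>i\<in>A. f i $$ fls_subdegree (f i))"
    using insert by auto
  ultimately show ?case
    using insert(1,2) fls_times_base[of "f a" "prod f A"] by (simp add: lc flip: sd)
qed simp_all

lemma brk_nonzero_subdegree:
  assumes "1 \<le> i"
  shows "brk i \<noteq> (0 :: 'a::{finite,field} fls)" "fls_subdegree (brk i :: 'a fls) = 1"
proof -
  have "2 \<le> CARD('a) ^ i"
    using two_le_card_field[where 'a='a] power_increasing[OF assms, of "CARD('a)"] by simp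
  then have "2 \<le> int CARD('a) ^ i" by (metis of_nat_le_iff of_nat_numeral of_nat_power)
  then have nth: "(brk i :: 'a fls) $$ k = (if k = 1 then -1 else 0)" if "k \<le> 1" for k
    using that by (auto simp: brk_def)
  then show "brk i \<noteq> (0 :: 'a fls)" by (metis fls_zero_nth neg_equal_0_iff_equal one_neq_zero order_refl)
  show "fls_subdegree (brk i :: 'a fls) = 1"
    using nth by (intro fls_subdegree_eqI) auto
qed

lemma Fcar_nonzero: "Fcar n \<noteq> (0 :: 'a::{finite,field} fls)"
  using brk_nonzero_subdegree(1)[where 'a='a] by (auto simp: Fcar_def prod_zero_iff)

lemma subdegree_Fcar:
  "fls_subdegree (Fcar n :: 'a::{finite,field} fls) = int n + (\<Sum>m\<in>polys_lt n. fls_subdegree (m :: 'a fls))"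
proof -
  have "(brk i :: 'a fls) ^ (CARD('a) ^ (n - i)) \<noteq> 0" if "i \<in> {1..n}" for i
    using that brk_nonzero_subdegree(1)[of i] by simp
  then have "fls_subdegree (Fcar n :: 'a fls) =
      (\<Sum>i=1..n. fls_subdegree ((brk i :: 'a fls) ^ (CARD('a) ^ (n - i))))"
    unfolding Fcar_def by (rule fls_prod_subdegree[THEN conjunct1])
  also have "\<dots> = (\<Sum>i=1..n. int CARD('a) ^ (n - i))"
    by (intro sum.cong refl) (simp add: fls_subdegree_pow brk_nonzero_subdegree(2))
  finally show ?thesis by (simp add: sum_subdegree_polys_lt)
qed

lemma Ecar_eq_ecar_divide: "Ecar n x = ecar n x / Fcar n"
  by (simp add: Ecar_def ecar_def Fcar_def polys_lt_0)

text \<open>Translating by the truncation \<open>x mod T\<^sup>n\<close> permutes \<open>polys_lt n\<close>, so \<open>e\<^sub>n(x)\<close> only depends on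
  \<open>z = x - (x mod T\<^sup>n)\<close>, whose valuation is at least \<open>n\<close>.\<close>
lemma ecar_eq_prod_shifted:
  fixes n :: nat and x :: "'a::{finite,field} fls"
  assumes x: "x \<in> Oring"
  defines "z \<equiv> x - poly_of_digits n (digit_vector n x)"
  shows "ecar n x = z * (\<Prod>m\<in>polys_lt n - {0}. z - m)"
proof -
  define a where "a = poly_of_digits n (digit_vector n x)"
  have a: "a \<in> polys_lt n" by (simp add: a_def poly_of_digits_in_polys_lt)
  have "bij_betw (\<lambda>m. m - a) (polys_lt n) (polys_lt n)"
    by (rule bij_betwI[where g="\<lambda>m. m + a"]) (auto simp: polys_lt_diff polys_lt_add a)
  then have "ecar n x = (\<Prod>m\<in>polys_lt n. z - m)"
    unfolding ecar_def using prod.reindex_bij_betw[of "\<lambda>m. m - a" _ _ "\<lambda>m. z - m"]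
    by (simp add: z_def a_def algebra_simps)
  also have "\<dots> = (z - 0) * (\<Prod>m\<in>polys_lt n - {0}. z - m)"
    by (rule prod.remove) (simp_all add: finite_polys_lt)
  finally show ?thesis by simp
qed

lemma lowest_term_diff_polys_lt:
  assumes m: "m \<in> polys_lt n" "m \<noteq> 0" and z: "val_ge (int n) z"
  shows "z - m \<noteq> 0" "fls_subdegree (z - m) = fls_subdegree m"
    "(z - m) $$ fls_subdegree (z - m) = - (m $$ fls_subdegree m)"
proof -
  have lt: "fls_subdegree m < int n" using subdegree_polys_lt[OF m] by simp
  have nth: "(z - m) $$ i = - (m $$ i)" if "i < int n" for i
    using z that by (simp add: val_ge_def)
  have "(z - m) $$ fls_subdegree m \<noteq> 0" using nth[OF lt] m(2) by simp
  then show "z - m \<noteq> 0" by auto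
  show sd: "fls_subdegree (z - m) = fls_subdegree m"
    using nth lt \<open>(z - m) $$ fls_subdegree m \<noteq> 0\<close> by (intro fls_subdegree_eqI) auto
  show "(z - m) $$ fls_subdegree (z - m) = - (m $$ fls_subdegree m)"
    unfolding sd using nth[OF lt] .
qed

lemma lowest_term_prod_diff_polys_lt:
  fixes z :: "'a::{finite,field} fls"
  assumes z: "val_ge (int n) z"
  defines "R \<equiv> \<Prod>m\<in>polys_lt n - {0}. z - m"
  shows "R \<noteq> 0" "fls_subdegree R = (\<Sum>m\<in>polys_lt n. fls_subdegree (m :: 'a fls))"
    "R $$ fls_subdegree R = (\<Prod>m\<in>polys_lt n - {0}. - (m $$ fls_subdegree m))"
proof -
  have "(\<Sum>m\<in>polys_lt n - {0 :: 'a fls}. fls_subdegree m) = (\<Sum>m\<in>polys_lt n. fls_subdegree (m :: 'a fls))"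
    by (simp add: sum_diff1 finite_polys_lt)
  then show "R \<noteq> 0" "fls_subdegree R = (\<Sum>m\<in>polys_lt n. fls_subdegree (m :: 'a fls))"
    "R $$ fls_subdegree R = (\<Prod>m\<in>polys_lt n - {0}. - (m $$ fls_subdegree m))"
    using fls_prod_subdegree[of "polys_lt n - {0}" "\<lambda>m. z - m"] lowest_term_diff_polys_lt[OF _ _ z]
    by (auto simp: R_def prod_zero_iff finite_polys_lt)
qed

definition carlitz_const :: "nat \<Rightarrow> 'a::{finite,field}" where
  "carlitz_const n =
    (\<Prod>m\<in>polys_lt n - {0}. - (m $$ fls_subdegree m)) /
    (Fcar n $$ fls_subdegree (Fcar n :: 'a fls))"

lemma carlitz_const_nonzero: "carlitz_const n \<noteq> (0::'a::{finite,field})"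
  using Fcar_nonzero[where 'a='a] by (simp add: carlitz_const_def finite_polys_lt)

text \<open>With \<open>R = \<Prod>\<^sub>m\<^sub>\<noteq>\<^sub>0 (z - m)\<close>, the valuations in \<open>E\<^sub>n(x) F\<^sub>n = z R\<close> give \<open>v(E\<^sub>n(x)) = v(z) - n \<ge> 0\<close>,
  and comparing the coefficients of \<open>T\<^bsup>v(F\<^sub>n)\<^esup>\<close> gives the reduction.\<close>
lemma Ecar_in_Oring_nth_0:
  fixes x :: "'a::{finite,field} fls"
  assumes x: "x \<in> Oring"
  shows "Ecar n x \<in> Oring \<and> Ecar n x $$ 0 = carlitz_const n * x $$ int n"
proof -
  define z where "z = x - poly_of_digits n (digit_vector n x)"
  define R where "R = (\<Prod>m\<in>polys_lt n - {0}. z - m)"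
  define F where "F = (Fcar n :: 'a fls)"
  define E where "E = Ecar n x"
  have z: "val_ge (int n) z" "z $$ int n = x $$ int n"
    using val_ge_diff_poly_of_digit_vector[OF x] by (simp_all add: z_def poly_of_digits_def)
  note R = lowest_term_prod_diff_polys_lt[OF z(1), folded R_def]
  have F: "F \<noteq> 0" "fls_subdegree F = int n + fls_subdegree R"
    using Fcar_nonzero subdegree_Fcar R(2) by (simp_all add: F_def)
  have EF: "E * F = z * R"
    using ecar_eq_prod_shifted[OF x] F(1) by (simp add: E_def F_def R_def z_def Ecar_eq_ecar_divide)
  have "val_ge 0 E"
  proof (cases "z = 0")
    case True
    then show ?thesis using EF F(1) by simp
  next
    case False
    then have "E \<noteq> 0" using EF F(1) R(1) by auto
    then have "fls_subdegree E + fls_subdegree F = fls_subdegree z + fls_subdegree R"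
      using arg_cong[OF EF, of fls_subdegree] F(1) False R(1) by simp
    moreover have "int n \<le> fls_subdegree z" using z(1) False val_ge_iff_le_subdegree by blast
    ultimately show "val_ge 0 E"
      using F(2) \<open>E \<noteq> 0\<close> by (simp add: val_ge_iff_le_subdegree)
  qed
  have "E $$ 0 * F $$ fls_subdegree F = (E * F) $$ (0 + fls_subdegree F)"
    using fls_times_nth_val_ge[OF \<open>val_ge 0 E\<close> val_ge_subdegree] by simp
  also have "\<dots> = z $$ int n * R $$ fls_subdegree R"
    using EF F(2) fls_times_nth_val_ge[OF z(1) val_ge_subdegree[of R]] by simp
  finally have "E $$ 0 = carlitz_const n * x $$ int n"
    using F(1) R(3) z(2) by (simp add: carlitz_const_def F_def field_simps)
  then show ?thesis
    using \<open>val_ge 0 E\<close> by (simp add: E_def Oring_iff_val_ge)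
qed

lemma continuous_on_Ecar: "continuous_on S (Ecar n :: 'a::{finite,field} fls \<Rightarrow> 'a fls)"
proof -
  have "Ecar n = (\<lambda>x::'a fls. (\<Prod>m\<in>polys_lt n. x - m) * inverse (Fcar n))"
    by (simp add: fun_eq_iff Ecar_eq_ecar_divide ecar_def divide_inverse)
  moreover have "continuous_on S (\<lambda>x::'a fls. (\<Prod>m\<in>polys_lt n. x - m) * inverse (Fcar n))"
    by (intro continuous_intros)
  ultimately show ?thesis by simp
qed

lemma orthonormal_basis_Gfun: "orthonormal_basis (\<lambda>j x. (Gfun j x :: 'a::{finite,field} fls) ^ (CARD('a) ^ m))"
proof -
  have "orthonormal_basis (\<lambda>j (x :: 'a fls). (\<Prod>n\<le>j. Ecar n x ^ digit CARD('a) j n) ^ (CARD('a) ^ m))"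
    by (rule orthonormal_basis_digit_products[where \<kappa>=carlitz_const])
      (simp_all add: continuous_on_Ecar Ecar_in_Oring_nth_0 carlitz_const_nonzero)
  then show ?thesis by (simp add: Gfun_def)
qed

theorem corollary5:
  fixes m :: nat
  shows "orthonormal_basis (\<lambda>j x. (Gfun j x :: 'a::{finite,field} fls) ^ (CARD('a) ^ m)) \<and>
         orthonormal_basis (\<lambda>j x. (Dfun j x :: 'a fls) ^ (CARD('a) ^ m))"
  using orthonormal_basis_Gfun orthonormal_basis_Dfun by blast

end
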